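(* Every rectangular satin has even order $n$. If $n\equiv 2 \pmod 4$, the satin belongs to species $26_o$; if $4\mid n$, it belongs to species $26_e$.
   Context: A prefabric consists of two perpendicular layers of unit-width strands, warps (vertical) and wefts (horizontal). The plane is divided into unit square cells. Each cell is dark if the warp is on top (seen from the front) and pale otherwise. A symmetry is an isometry of the plane, possibly combined with the side reversal $\tau$, that preserves the prefabric. $G_1$ denotes the planar part of the symmetry group, and $H_1$ its side-preserving subgroup. The $(n,s)$ satin, with $1<s<n-1$ and $\gcd(n,s)=1$, is the design of period $n$ in which row $i$ has its single dark cell in column $is \bmod n$. It is isonemal iff $s^2\equiv\pm1\pmod n$. It is square iff $s^2\equiv -1 \pmod n$. A non-square isonemal satin is called rectangular if $n$ is even and $s^2\equiv 1\pmod{2n}$. A prefabric belongs to species 26 if: - $G_1$ is of crystallographic type $pmm$, with mirrors at $45^\circ$ to the strands, every mirror symmetry being combined with $\tau$; - $H_1$ is of type $p2$, consisting of translations and side-preserving half-turns; - some half-turn centres lie at cell centres and others at cell corners. Within species 26: - Species $26_o$: every mirror carries half-turn centres alternately at cell centres and cell corners. Equivalently, a quarter of the $G_1$ lattice unit measures $a\delta$ by $b\delta$ with $a,b$ both odd, where $\delta$ is the length of a cell diagonal. - Species $26_e$: the mirrors in one direction contain alternately only cell-centre and only cell-corner half-turn centres, while the mirrors in the other direction each contain both kinds alternately. Equivalently, the corresponding dimensions are $a\delta$ by $b\delta$ with $a$ odd and $b$ even. *)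

theory Defs
  imports Complex_Main "HOL-Number_Theory.Cong"
begin

text \<open>Cell (i,j) is the unit square with lower left
corner (i,j): i is the column index (position along the horizontal), j is the row
index. Warps are vertical strands, wefts horizontal. A prefabric is given by its
design: dark i j holds iff in cell (column i, row j) the warp is on top.\<close>

definition cell :: "int \<Rightarrow> int \<Rightarrow> complex set" where
  "cell i j = {z. of_int i \<le> Re z \<and> Re z \<le> of_int i + 1 \<and>
                  of_int j \<le> Im z \<and> Im z \<le> of_int j + 1}"

definition isometry :: "(complex \<Rightarrow> complex) \<Rightarrow> bool" where
  "isometry g \<longleftrightarrow> (\<forall>z w. dist (g z) (g w) = dist z w)"

text \<open>A grid-preserving isometry interchanges warps and wefts iff it maps the
vertical unit segment from 0 to i to a horizontal segment.\<close>
definition swaps_strands :: "(complex \<Rightarrow> complex) \<Rightarrow> bool" where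
  "swaps_strands g \<longleftrightarrow> Im (g \<i>) = Im (g 0)"

text \<open>is_symmetry dark g flip: the isometry g, combined with the side reversal tau
iff flip, preserves the prefabric. The image of a cell has the same strand on top
(seen from the front) iff neither or both of the strand interchange and the
side reversal occur.\<close>
definition is_symmetry :: "(int \<Rightarrow> int \<Rightarrow> bool) \<Rightarrow> (complex \<Rightarrow> complex) \<Rightarrow> bool \<Rightarrow> bool" where
  "is_symmetry dark g flip \<longleftrightarrow> isometry g \<and>
     (\<forall>i j. \<exists>i' j'. g ` cell i j = cell i' j' \<and>
        (dark i' j' \<longleftrightarrow> (dark i j \<noteq> (swaps_strands g \<noteq> flip))))"

definition G1 :: "(int \<Rightarrow> int \<Rightarrow> bool) \<Rightarrow> (complex \<Rightarrow> complex) set" where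
  "G1 dark = {g. \<exists>flip. is_symmetry dark g flip}"

definition H1 :: "(int \<Rightarrow> int \<Rightarrow> bool) \<Rightarrow> (complex \<Rightarrow> complex) set" where
  "H1 dark = {g. is_symmetry dark g False}"

definition gauss_ints :: "complex set" where
  "gauss_ints = {of_int m + of_int k * \<i> | m k. True}"

definition pmm_std :: "(complex \<Rightarrow> complex) set" where
  "pmm_std = {(\<lambda>z. p z + t) | p t.
      p \<in> {(\<lambda>w. w), (\<lambda>w. - w), (\<lambda>w. cnj w), (\<lambda>w. - cnj w)} \<and> t \<in> gauss_ints}"

definition p2_std :: "(complex \<Rightarrow> complex) set" where
  "p2_std = {(\<lambda>z. p z + t) | p t. p \<in> {(\<lambda>w. w), (\<lambda>w. - w)} \<and> t \<in> gauss_ints}"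

definition real_affine :: "(complex \<Rightarrow> complex) \<Rightarrow> bool" where
  "real_affine \<phi> \<longleftrightarrow> (\<exists>a b c. \<forall>z. \<phi> z = a * z + b * cnj z + c)"

text \<open>G has the crystallographic type of the standard group S: it is conjugate to S
by an (invertible) affine map of the plane.\<close>
definition same_type :: "(complex \<Rightarrow> complex) set \<Rightarrow> (complex \<Rightarrow> complex) set \<Rightarrow> bool" where
  "same_type G S \<longleftrightarrow> (\<exists>\<phi> \<psi>. real_affine \<phi> \<and> (\<forall>z. \<psi> (\<phi> z) = z) \<and> (\<forall>z. \<phi> (\<psi> z) = z) \<and>
       G = (\<lambda>s. \<phi> \<circ> s \<circ> \<psi>) ` S)"

definition type_pmm :: "(complex \<Rightarrow> complex) set \<Rightarrow> bool" where
  "type_pmm G \<longleftrightarrow> same_type G pmm_std"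

definition type_p2 :: "(complex \<Rightarrow> complex) set \<Rightarrow> bool" where
  "type_p2 G \<longleftrightarrow> same_type G p2_std"

definition line_dir :: "complex \<Rightarrow> complex \<Rightarrow> complex set" where
  "line_dir a d = {a + of_real x * d | x. True}"

definition parallel_to :: "complex set \<Rightarrow> complex \<Rightarrow> bool" where
  "parallel_to l d \<longleftrightarrow> (\<exists>a. l = line_dir a d)"

definition is_mirror :: "(complex \<Rightarrow> complex) \<Rightarrow> bool" where
  "is_mirror g \<longleftrightarrow> isometry g \<and> g \<noteq> id \<and> (\<exists>a d. d \<noteq> 0 \<and> (\<forall>z \<in> line_dir a d. g z = z))"

definition mirror_lines :: "(complex \<Rightarrow> complex) set \<Rightarrow> complex set set" where
  "mirror_lines G = {{z. g z = z} | g. g \<in> G \<and> is_mirror g}"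

definition half_turn :: "complex \<Rightarrow> complex \<Rightarrow> complex" where
  "half_turn c = (\<lambda>z. 2 * c - z)"

definition half_turn_centres :: "(complex \<Rightarrow> complex) set \<Rightarrow> complex set" where
  "half_turn_centres G = {c. half_turn c \<in> G}"

definition is_cell_centre :: "complex \<Rightarrow> bool" where
  "is_cell_centre c \<longleftrightarrow> (\<exists>i j::int. c = Complex (of_int i + 1/2) (of_int j + 1/2))"

definition is_cell_corner :: "complex \<Rightarrow> bool" where
  "is_cell_corner c \<longleftrightarrow> (\<exists>i j::int. c = Complex (of_int i) (of_int j))"

definition strictly_between :: "complex \<Rightarrow> complex \<Rightarrow> complex \<Rightarrow> bool" where
  "strictly_between c1 c2 c \<longleftrightarrow> (\<exists>u::real. 0 < u \<and> u < 1 \<and> c = c1 + of_real u * (c2 - c1))"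

definition alternating_on :: "complex set \<Rightarrow> complex set \<Rightarrow> bool" where
  "alternating_on C l \<longleftrightarrow>
     C \<inter> l \<noteq> {} \<and>
     (\<forall>c \<in> C \<inter> l. is_cell_centre c \<or> is_cell_corner c) \<and>
     (\<forall>c1 \<in> C \<inter> l. \<forall>c2 \<in> C \<inter> l. c1 \<noteq> c2 \<longrightarrow>
        \<not> (\<exists>c \<in> C \<inter> l. strictly_between c1 c2 c) \<longrightarrow>
        (is_cell_centre c1 \<and> is_cell_corner c2) \<or> (is_cell_corner c1 \<and> is_cell_centre c2))"

definition only_centres_on :: "complex set \<Rightarrow> complex set \<Rightarrow> bool" where
  "only_centres_on C l \<longleftrightarrow> C \<inter> l \<noteq> {} \<and> (\<forall>c \<in> C \<inter> l. is_cell_centre c)"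

definition only_corners_on :: "complex set \<Rightarrow> complex set \<Rightarrow> bool" where
  "only_corners_on C l \<longleftrightarrow> C \<inter> l \<noteq> {} \<and> (\<forall>c \<in> C \<inter> l. is_cell_corner c)"

text \<open>l1 and l2 are distinct adjacent members of the family M of lines parallel to d
(offset of a point z transverse to d is Im (cnj d * z)).\<close>
definition adjacent_parallel :: "complex set set \<Rightarrow> complex \<Rightarrow> complex set \<Rightarrow> complex set \<Rightarrow> bool" where
  "adjacent_parallel M d l1 l2 \<longleftrightarrow>
     l1 \<in> M \<and> l2 \<in> M \<and> parallel_to l1 d \<and> parallel_to l2 d \<and> l1 \<noteq> l2 \<and>
     \<not> (\<exists>l3 \<in> M. parallel_to l3 d \<and>
          (\<exists>z1 \<in> l1. \<exists>z2 \<in> l2. \<exists>z3 \<in> l3.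
             min (Im (cnj d * z1)) (Im (cnj d * z2)) < Im (cnj d * z3) \<and>
             Im (cnj d * z3) < max (Im (cnj d * z1)) (Im (cnj d * z2))))"

definition species26 :: "(int \<Rightarrow> int \<Rightarrow> bool) \<Rightarrow> bool" where
  "species26 dark \<longleftrightarrow>
     type_pmm (G1 dark) \<and>
     (\<forall>g \<in> G1 dark. is_mirror g \<longrightarrow>
        (\<exists>a. \<exists>d \<in> {1 + \<i>, 1 - \<i>}. {z. g z = z} = line_dir a d)) \<and>
     (\<forall>g \<in> G1 dark. is_mirror g \<longrightarrow> is_symmetry dark g True \<and> g \<notin> H1 dark) \<and>
     type_p2 (H1 dark) \<and>
     (\<exists>c \<in> half_turn_centres (H1 dark). is_cell_centre c) \<and>
     (\<exists>c \<in> half_turn_centres (H1 dark). is_cell_corner c)"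

definition species26o :: "(int \<Rightarrow> int \<Rightarrow> bool) \<Rightarrow> bool" where
  "species26o dark \<longleftrightarrow> species26 dark \<and>
     (\<forall>l \<in> mirror_lines (G1 dark). alternating_on (half_turn_centres (G1 dark)) l)"

definition species26e :: "(int \<Rightarrow> int \<Rightarrow> bool) \<Rightarrow> bool" where
  "species26e dark \<longleftrightarrow> species26 dark \<and>
     (let M = mirror_lines (G1 dark); C = half_turn_centres (G1 dark) in
      \<exists>d d'. {d, d'} = {1 + \<i>, 1 - \<i>} \<and> d \<noteq> d' \<and>
        (\<forall>l \<in> M. parallel_to l d \<longrightarrow> only_centres_on C l \<or> only_corners_on C l) \<and>
        (\<forall>l1 l2. adjacent_parallel M d l1 l2 \<longrightarrow>
            (only_centres_on C l1 \<longleftrightarrow> only_corners_on C l2)) \<and>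
        (\<forall>l \<in> M. parallel_to l d' \<longrightarrow> alternating_on C l))"

definition satin :: "nat \<Rightarrow> nat \<Rightarrow> int \<Rightarrow> int \<Rightarrow> bool" where
  "satin n s x y \<longleftrightarrow> [x = y * int s] (mod int n)"

definition is_satin :: "nat \<Rightarrow> nat \<Rightarrow> bool" where
  "is_satin n s \<longleftrightarrow> 1 < s \<and> s + 1 < n \<and> coprime n s"

definition isonemal_satin :: "nat \<Rightarrow> nat \<Rightarrow> bool" where
  "isonemal_satin n s \<longleftrightarrow> is_satin n s \<and>
     ([int s ^ 2 = 1] (mod int n) \<or> [int s ^ 2 = -1] (mod int n))"

definition square_satin :: "nat \<Rightarrow> nat \<Rightarrow> bool" where
  "square_satin n s \<longleftrightarrow> is_satin n s \<and> [int s ^ 2 = -1] (mod int n)"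

definition rectangular_satin :: "nat \<Rightarrow> nat \<Rightarrow> bool" where
  "rectangular_satin n s \<longleftrightarrow> isonemal_satin n s \<and> \<not> square_satin n s \<and>
     even n \<and> [int s ^ 2 = 1] (mod 2 * int n)"

end

theory Submission
  imports Defs "HOL-Analysis.Cartesian_Space"
begin

text \<open>
  Write the rectangular (n,s) satin with n = 2PQ, where 2P divides s + 1 and
  2Q divides s - 1 (such a factorisation exists because 2n divides s^2 - 1).  With respect to
  this factorisation the dark cells (x,y) of the satin are exactly the points of the lattice
  spanned by (P,P) and (Q,-Q).

  1. Every isometry mapping cells onto cells is z \<mapsto> \<rho> z + t with \<rho> one of the eight linear
     symmetries of the unit square and t a Gaussian integer.
  2. Since no two edge-adjacent cells of a satin are dark, every symmetry preserves the colour
     of cells, and the lattice description of the dark cells then shows that the symmetries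
     are exactly the lattice translations, the half-turns about the points
     ((1+(mP+kQ))/2, (1+(mP-kQ))/2), and the (glide) reflections along the two diagonals.
     The latter interchange warps and wefts and are therefore combined with \<tau>.
  3. An explicit affine map conjugates these groups to the standard pmm and p2 groups.
  4. The mirrors are the diagonal lines through the half-turn centres; along a mirror of
     direction 1+i (resp. 1-i) consecutive half-turn centres differ by a step (P,P)/2 (resp.
     (Q,-Q)/2).  A half-turn centre is a cell centre or a cell corner according to the parity
     of mP + kQ.  Hence the parities of P and Q decide the species: if n = 2 mod 4 both are
     odd (species 26_o); if 4 divides n exactly one of them is even (species 26_e).
\<close>

text \<open>Writing s = 2u+1 (s is odd, being coprime
  to the even n), the hypothesis 2n | s^2 - 1 = 4u(u+1) says n/2 divides u(u+1); split this
  divisor as P*Q with P | u+1 and Q | u.\<close>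
lemma rectangular_satin_factorisation:
  assumes "rectangular_satin n s"
  obtains P Q :: int where "P > 0" "Q > 0" "2*P*Q = int n"
    "2*P dvd int s + 1" "2*Q dvd int s - 1"
proof -
  from assms have s1: "1 < s" and cop: "coprime n s" and "even n"
    and s2: "[int s ^ 2 = 1] (mod 2 * int n)"
    unfolding rectangular_satin_def isonemal_satin_def is_satin_def by auto
  then obtain m where nm: "n = 2*m" by blast
  have "odd s"
    using cop \<open>even n\<close> coprime_common_divisor[of n s 2] by auto
  then obtain u where su: "s = 2*u+1" using oddE by blast
  have "2 * int n dvd int s ^ 2 - 1" using s2 cong_iff_dvd_diff by blast
  also have "int s ^ 2 - 1 = 4 * int ((u+1) * u)"
    using su by (simp add: power2_eq_square algebra_simps)
  also have "2 * int n = 4 * int m" using nm by simp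
  finally have "int m dvd int ((u+1) * u)" by (rule zdvd_mult_cancel) simp
  then obtain b c where bc: "m = b * c" "b dvd u+1" "c dvd u"
    using division_decomp[of m "u+1" u] by (auto simp only: int_dvd_int_iff)
  have "m > 0" "u > 0" using nm s1 su \<open>even n\<close> assms
    unfolding rectangular_satin_def isonemal_satin_def is_satin_def by auto
  then have "b > 0" "c > 0" using bc(1) by auto
  show ?thesis
  proof
    show "int b > 0" "int c > 0" using \<open>b > 0\<close> \<open>c > 0\<close> by simp_all
    show "2 * int b * int c = int n" using nm bc(1) by simp
    have "int b dvd int (u+1)" using bc(2) by (simp only: int_dvd_int_iff)
    then have "2 * int b dvd 2 * int (u+1)" by (rule mult_dvd_mono[OF dvd_refl])
    then show "2 * int b dvd int s + 1" using su by (simp add: algebra_simps)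
    have "2 * int c dvd 2 * int u" using bc(3) by (simp add: int_dvd_int_iff)
    then show "2 * int c dvd int s - 1" using su by (simp add: algebra_simps)
  qed
qed

section \<open>Cells and the isometries permuting them\<close>

lemma mem_cell:
  "z \<in> cell i j \<longleftrightarrow> of_int i \<le> Re z \<and> Re z \<le> of_int i + 1 \<and> of_int j \<le> Im z \<and> Im z \<le> of_int j + 1"
  by (simp add: cell_def)

lemma cell_eq_imp_eq:
  assumes "cell i j = cell i' j'"
  shows "i = i' \<and> j = j'"
proof -
  have "Complex (of_int i) (of_int j) \<in> cell i' j'"
    by (simp add: mem_cell[of _ i j] flip: assms)
  moreover have "Complex (of_int i') (of_int j') \<in> cell i j"
    by (simp add: mem_cell[of _ i' j'] assms)
  ultimately show ?thesis unfolding mem_cell by simp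
qed

lemma image_eq_by_inverse:
  assumes "\<And>z. z \<in> A \<Longrightarrow> g z \<in> B" "\<And>w. w \<in> B \<Longrightarrow> h w \<in> A \<and> g (h w) = w"
  shows "g ` A = B"
  using assms by (auto intro!: image_eqI[where x="h _"])

lemma cell_image_id: "(\<lambda>z. z + Complex (of_int a) (of_int b)) ` cell i j = cell (i+a) (j+b)"
  by (rule image_eq_by_inverse[where h="\<lambda>w. w - Complex (of_int a) (of_int b)"]) (auto simp: mem_cell)
lemma cell_image_neg: "(\<lambda>z. - z + Complex (of_int a) (of_int b)) ` cell i j = cell (a-1-i) (b-1-j)"
  by (rule image_eq_by_inverse[where h="\<lambda>w. Complex (of_int a) (of_int b) - w"]) (auto simp: mem_cell)
lemma cell_image_cnj: "(\<lambda>z. cnj z + Complex (of_int a) (of_int b)) ` cell i j = cell (i+a) (b-1-j)"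
  by (rule image_eq_by_inverse[where h="\<lambda>w. cnj (w - Complex (of_int a) (of_int b))"]) (auto simp: mem_cell)
lemma cell_image_neg_cnj: "(\<lambda>z. - cnj z + Complex (of_int a) (of_int b)) ` cell i j = cell (a-1-i) (j+b)"
  by (rule image_eq_by_inverse[where h="\<lambda>w. - cnj (w - Complex (of_int a) (of_int b))"]) (auto simp: mem_cell)
lemma cell_image_i: "(\<lambda>z. \<i> * z + Complex (of_int a) (of_int b)) ` cell i j = cell (a-1-j) (b+i)"
  by (rule image_eq_by_inverse[where h="\<lambda>w. - \<i> * (w - Complex (of_int a) (of_int b))"]) (auto simp: mem_cell)
lemma cell_image_neg_i: "(\<lambda>z. - \<i> * z + Complex (of_int a) (of_int b)) ` cell i j = cell (a+j) (b-1-i)"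
  by (rule image_eq_by_inverse[where h="\<lambda>w. \<i> * (w - Complex (of_int a) (of_int b))"]) (auto simp: mem_cell)
lemma cell_image_i_cnj: "(\<lambda>z. \<i> * cnj z + Complex (of_int a) (of_int b)) ` cell i j = cell (a+j) (b+i)"
  by (rule image_eq_by_inverse[where h="\<lambda>w. \<i> * cnj (w - Complex (of_int a) (of_int b))"]) (auto simp: mem_cell)
lemma cell_image_neg_i_cnj: "(\<lambda>z. - \<i> * cnj z + Complex (of_int a) (of_int b)) ` cell i j = cell (a-1-j) (b-1-i)"
  by (rule image_eq_by_inverse[where h="\<lambda>w. - \<i> * cnj (w - Complex (of_int a) (of_int b))"]) (auto simp: mem_cell)

lemma isometry_rotation: "cmod c = 1 \<Longrightarrow> isometry (\<lambda>z. c * z + t)"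
  unfolding isometry_def dist_norm by (simp add: ring_distribs[symmetric] norm_mult)

lemma isometry_reflection: "cmod c = 1 \<Longrightarrow> isometry (\<lambda>z. c * cnj z + t)"
proof -
  assume c: "cmod c = 1"
  have "c * cnj z + t - (c * cnj w + t) = c * cnj (z - w)" for z w by (simp add: algebra_simps)
  then show ?thesis
    using c unfolding isometry_def dist_norm by (simp add: norm_mult del: complex_cnj_diff)
qed

text \<open>An isometry of the plane is real-affine (Mazur--Ulam in the plane).\<close>
lemma isometry_affine:
  assumes "isometry g"
  shows "g z = g 0 + Re z *\<^sub>R (g 1 - g 0) + Im z *\<^sub>R (g \<i> - g 0)"
proof -
  define h where "h = (\<lambda>z. g z - g 0)"
  have "linear h"
    by (rule isometry_linear) (use assms in \<open>simp_all add: h_def isometry_def dist_norm\<close>)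
  have "h z = h (Re z *\<^sub>R 1 + Im z *\<^sub>R \<i>)" by (rule arg_cong[where f=h]) (simp add: complex_eq_iff)
  also have "\<dots> = Re z *\<^sub>R h 1 + Im z *\<^sub>R h \<i>"
    by (simp add: linear_add[OF \<open>linear h\<close>] linear_scale[OF \<open>linear h\<close>])
  finally show ?thesis by (simp add: h_def algebra_simps)
qed

text \<open>The coefficient patterns (Re \<rho>(1), Im \<rho>(1), Re \<rho>(i), Im \<rho>(i)) of the eight symmetries of
  the square, and the symmetries themselves.\<close>
definition square_patterns :: "(real \<times> real \<times> real \<times> real) set" where
  "square_patterns = {(1,0,0,1), (-1,0,0,-1), (1,0,0,-1), (-1,0,0,1),
                      (0,1,-1,0), (0,-1,1,0), (0,1,1,0), (0,-1,-1,0)}"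

definition square_symmetries :: "(complex \<Rightarrow> complex) set" where
  "square_symmetries = {(\<lambda>z. z), (\<lambda>z. - z), cnj, (\<lambda>z. - cnj z),
     (\<lambda>z. \<i> * z), (\<lambda>z. - \<i> * z), (\<lambda>z. \<i> * cnj z), (\<lambda>z. - \<i> * cnj z)}"

text \<open>Orthonormality plus the sign constraints forced by mapping the unit square into a unit
  square leave only the eight patterns.\<close>
lemma square_pattern_cases:
  fixes a1 a2 b1 b2 :: real
  assumes "\<bar>a1 + b1\<bar> = 1" "\<bar>a1 - b1\<bar> = 1" "\<bar>a2 + b2\<bar> = 1" "\<bar>a2 - b2\<bar> = 1"
    and "a1^2 + a2^2 = 1"
  shows "(a1, a2, b1, b2) \<in> square_patterns"
proof -
  define A1 B1 A2 B2 where "A1 = a1 + b1" and "B1 = a1 - b1" and "A2 = a2 + b2" and "B2 = a2 - b2"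
  have e: "a1 = (A1 + B1)/2" "b1 = (A1 - B1)/2" "a2 = (A2 + B2)/2" "b2 = (A2 - B2)/2"
    unfolding A1_def B1_def A2_def B2_def by simp_all
  have h: "A1 = 1 \<or> A1 = -1" "B1 = 1 \<or> B1 = -1" "A2 = 1 \<or> A2 = -1" "B2 = 1 \<or> B2 = -1"
    using assms(1-4) unfolding A1_def B1_def A2_def B2_def by arith+
  have "((A1 + B1)/2)^2 + ((A2 + B2)/2)^2 = 1" using assms(5) e by simp
  then show ?thesis
    unfolding e square_patterns_def using h by (elim disjE) (simp_all add: power2_eq_square)
qed

text \<open>An isometry mapping the cell (0,0) onto a cell has one of the eight square patterns as
  its linear part: the images of the corners 0, 1, i, 1+i must fit into a unit square.\<close>
lemma cell_isometry_pattern: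
  assumes iso: "isometry g" and cel: "g ` cell 0 0 = cell i' j'"
  shows "(Re (g 1 - g 0), Im (g 1 - g 0), Re (g \<i> - g 0), Im (g \<i> - g 0)) \<in> square_patterns"
proof -
  define a1 a2 b1 b2 where "a1 = Re (g 1 - g 0)" and "a2 = Im (g 1 - g 0)"
    and "b1 = Re (g \<i> - g 0)" and "b2 = Im (g \<i> - g 0)"
  have coords: "Re (g z) = Re (g 0) + Re z * a1 + Im z * b1"
    "Im (g z) = Im (g 0) + Re z * a2 + Im z * b2" for z
    unfolding a1_def a2_def b1_def b2_def by (subst isometry_affine[OF iso], simp)+
  have sq: "(Re (g z - g w))^2 + (Im (g z - g w))^2 = (cmod (z - w))^2" for z w
  proof -
    have "cmod (g z - g w) = cmod (z - w)" using iso by (simp add: isometry_def dist_norm)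
    then show ?thesis by (simp only: cmod_power2[symmetric])
  qed
  have na: "a1^2 + a2^2 = 1" and nb: "b1^2 + b2^2 = 1" and nab: "(a1-b1)^2 + (a2-b2)^2 = 2"
    using sq[of 1 0] sq[of \<i> 0] sq[of 1 \<i>] unfolding a1_def a2_def b1_def b2_def
    by (simp_all add: cmod_power2)
  have inc: "g z \<in> cell i' j'" if "z \<in> cell 0 0" for z using cel that by blast
  have c0: "of_int i' \<le> Re (g 0)" "Re (g 0) \<le> of_int i' + 1" "of_int j' \<le> Im (g 0)" "Im (g 0) \<le> of_int j' + 1"
    using inc[of 0] by (simp_all add: mem_cell)
  have c1: "of_int i' \<le> Re (g 0) + a1" "Re (g 0) + a1 \<le> of_int i' + 1"
    "of_int j' \<le> Im (g 0) + a2" "Im (g 0) + a2 \<le> of_int j' + 1"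
    using inc[of 1] coords[of 1] by (simp_all add: mem_cell)
  have c2: "of_int i' \<le> Re (g 0) + b1" "Re (g 0) + b1 \<le> of_int i' + 1"
    "of_int j' \<le> Im (g 0) + b2" "Im (g 0) + b2 \<le> of_int j' + 1"
    using inc[of \<i>] coords[of \<i>] by (simp_all add: mem_cell)
  have c3: "of_int i' \<le> Re (g 0) + a1 + b1" "Re (g 0) + a1 + b1 \<le> of_int i' + 1"
    "of_int j' \<le> Im (g 0) + a2 + b2" "Im (g 0) + a2 + b2 \<le> of_int j' + 1"
    using inc[of "1 + \<i>"] coords[of "1 + \<i>"] by (simp_all add: mem_cell)
  have "(a1-b1)^2 \<le> 1" "(a2-b2)^2 \<le> 1" "(a1+b1)^2 \<le> 1" "(a2+b2)^2 \<le> 1"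
    using c0 c1 c2 c3 by (simp_all add: abs_square_le_1)
  moreover have "(a1+b1)^2 + (a2+b2)^2 = 2"
    using na nb nab by (simp add: power2_eq_square algebra_simps)
  ultimately have "(a1+b1)^2 = 1" "(a1-b1)^2 = 1" "(a2+b2)^2 = 1" "(a2-b2)^2 = 1"
    using nab by linarith+
  then show ?thesis
    unfolding a1_def[symmetric] a2_def[symmetric] b1_def[symmetric] b2_def[symmetric] using na
    by (intro square_pattern_cases) (simp_all add: abs_square_eq_1)
qed

text \<open>Hence the isometries mapping cells to cells are z \<mapsto> \<rho> z + (a + bi) with \<rho> a symmetry of the
  square and a, b integers (the corner 0 must go to a cell corner).\<close>
lemma grid_isometry_form:
  assumes iso: "isometry g" and cel: "g ` cell 0 0 = cell i' j'"
  obtains \<rho> a b where "\<rho> \<in> square_symmetries" and "g = (\<lambda>z. \<rho> z + Complex (of_int a) (of_int b))"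
proof -
  define a1 a2 b1 b2 where "a1 = Re (g 1 - g 0)" and "a2 = Im (g 1 - g 0)"
    and "b1 = Re (g \<i> - g 0)" and "b2 = Im (g \<i> - g 0)"
  have pat: "(a1, a2, b1, b2) \<in> square_patterns"
    unfolding a1_def a2_def b1_def b2_def by (rule cell_isometry_pattern[OF iso cel])
  define t where "t = g 0"
  have coords: "Re (g z) = Re t + Re z * a1 + Im z * b1" "Im (g z) = Im t + Re z * a2 + Im z * b2" for z
    unfolding a1_def a2_def b1_def b2_def t_def by (subst isometry_affine[OF iso], simp)+
  have inc: "g z \<in> cell i' j'" if "z \<in> cell 0 0" for z using cel that by blast
  have c: "of_int i' \<le> Re t + x * a1 + y * b1" "Re t + x * a1 + y * b1 \<le> of_int i' + 1"
    "of_int j' \<le> Im t + x * a2 + y * b2" "Im t + x * a2 + y * b2 \<le> of_int j' + 1"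
    if "x \<in> {0, 1}" "y \<in> {0, 1}" for x y
    using inc[of "Complex x y"] coords[of "Complex x y"] that by (auto simp: mem_cell)
  note corners = c[of 0 0, simplified] c[of 1 0, simplified] c[of 0 1, simplified]
  have "Re t = of_int i' \<or> Re t = of_int i' + 1"
    using pat corners unfolding square_patterns_def by (safe; linarith)
  moreover have "Im t = of_int j' \<or> Im t = of_int j' + 1"
    using pat corners unfolding square_patterns_def by (safe; linarith)
  ultimately
  obtain a b :: int where t: "t = Complex (of_int a) (of_int b)"
    by (metis complex_surj of_int_add of_int_1)
  have "\<exists>\<rho> \<in> square_symmetries. \<forall>z. g z = \<rho> z + t"
    using pat unfolding square_patterns_def square_symmetries_def
    by (elim insertE emptyE) (simp_all add: complex_eq_iff coords)
  then obtain \<rho> where "\<rho> \<in> square_symmetries" "g = (\<lambda>z. \<rho> z + t)" by blast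
  then show ?thesis using t that by blast
qed

lemma symmetry_cell_rule:
  assumes "is_symmetry dark g flip" and "\<And>i j. g ` cell i j = cell (fi i j) (fj i j)"
  shows "dark (fi i j) (fj i j) \<longleftrightarrow> (dark i j \<noteq> (swaps_strands g \<noteq> flip))"
proof -
  from assms(1) obtain i' j' where "g ` cell i j = cell i' j'"
    and "dark i' j' \<longleftrightarrow> (dark i j \<noteq> (swaps_strands g \<noteq> flip))"
    unfolding is_symmetry_def by blast
  moreover have "i' = fi i j" "j' = fj i j"
    using cell_eq_imp_eq[of "fi i j" "fj i j" i' j'] assms(2) calculation(1) by auto
  ultimately show ?thesis by simp
qed

lemma symmetry_of_cell_rule:
  assumes "isometry g" and "\<And>i j. g ` cell i j = cell (fi i j) (fj i j)"
    and "\<And>i j. dark (fi i j) (fj i j) \<longleftrightarrow> dark i j"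
  shows "is_symmetry dark g (swaps_strands g)"
  unfolding is_symmetry_def
proof (intro conjI allI)
  fix i j
  show "\<exists>i' j'. g ` cell i j = cell i' j' \<and> (dark i' j' \<longleftrightarrow> (dark i j \<noteq> (swaps_strands g \<noteq> swaps_strands g)))"
    by (intro exI[of _ "fi i j"] exI[of _ "fj i j"]) (simp add: assms(2,3))
qed (fact assms(1))

section \<open>The symmetries of a satin adapted to a factorisation n = 2PQ\<close>

locale satin_factorisation =
  fixes n s :: nat and P Q :: int
  assumes n_gt_2: "2 < n" and n_eq: "2*P*Q = int n"
    and P_pos: "P > 0" and Q_pos: "Q > 0"
    and P_dvd: "2*P dvd int s + 1" and Q_dvd: "2*Q dvd int s - 1"
begin

abbreviation dk :: "int \<Rightarrow> int \<Rightarrow> bool" where "dk \<equiv> satin n s"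

lemma dark_iff: "dk x y \<longleftrightarrow> int n dvd x - y * int s"
  by (simp add: satin_def cong_iff_dvd_diff)

lemma n_dvd_s_squared: "int n dvd int s ^ 2 - 1"
proof -
  obtain q1 q2 where q1: "int s + 1 = 2*P*q1" and q2: "int s - 1 = 2*Q*q2"
    using P_dvd Q_dvd by (meson dvdE)
  have "int s ^ 2 - 1 = (int s + 1) * (int s - 1)" by (simp add: power2_eq_square algebra_simps)
  also have "\<dots> = int n * (2*q1*q2)" unfolding q1 q2 n_eq[symmetric] by (simp add: algebra_simps)
  finally show ?thesis by simp
qed

text \<open>Numbers that n cannot divide; they make the cells (1,0) and (2,0) pale and forbid
  edge-adjacent dark cells.\<close>
lemma n_not_dvd_1: "\<not> int n dvd 1" and n_not_dvd_2: "\<not> int n dvd 2"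
  using n_gt_2 zdvd_imp_le[of "int n" 1] zdvd_imp_le[of "int n" 2] by auto

lemma n_not_dvd_2s: "\<not> int n dvd 2 * int s"
proof
  assume "int n dvd 2 * int s"
  then have "int n dvd (2 * int s) * int s" by (rule dvd_mult2)
  moreover have "int n dvd 2 * (int s ^ 2 - 1)" using n_dvd_s_squared by (rule dvd_mult)
  ultimately have "int n dvd (2 * int s) * int s - 2 * (int s ^ 2 - 1)" by (rule dvd_diff)
  also have "(2 * int s) * int s - 2 * (int s ^ 2 - 1) = 2" by (simp add: power2_eq_square)
  finally show False using n_not_dvd_2 by simp
qed

lemma n_not_dvd_s: "\<not> int n dvd int s"
  using n_not_dvd_2s by (meson dvd_mult)

lemma dark_diff: "dk x y \<Longrightarrow> dk x' y' \<Longrightarrow> int n dvd (x' - x) - (y' - y) * int s"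
  unfolding dark_iff by (drule (1) dvd_diff) (simp add: algebra_simps)

lemma no_adjacent_dark:
  assumes "dk x y" "dk x' y'" "\<bar>x' - x\<bar> + \<bar>y' - y\<bar> = 1"
  shows False
proof -
  have d: "int n dvd (x' - x) - (y' - y) * int s" using dark_diff assms(1,2) .
  from assms(3) consider "y' = y" "x' - x = 1 \<or> x' - x = -1" | "x' = x" "y' - y = 1 \<or> y' - y = -1"
    by arith
  then show False
    by cases (use d n_not_dvd_1 n_not_dvd_s in auto)
qed

text \<open>The satin is symmetric in rows and columns, because s^2 = 1 (mod n).\<close>
lemma dark_symmetric_imp: "dk x y \<Longrightarrow> dk y x"
proof -
  assume "dk x y"
  then have "int n dvd (- int s) * (x - y * int s) - y * (int s ^ 2 - 1)"
    using n_dvd_s_squared by (simp add: dark_iff dvd_diff)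
  also have "(- int s) * (x - y * int s) - y * (int s ^ 2 - 1) = y - x * int s"
    by (simp add: algebra_simps power2_eq_square)
  finally show "dk y x" by (simp add: dark_iff)
qed

lemma dark_symmetric: "dk y x \<longleftrightarrow> dk x y"
  using dark_symmetric_imp by blast

lemma dark_translate:
  assumes "dk a b" shows "dk (x + a) (y + b) \<longleftrightarrow> dk x y"
proof -
  have e: "(x + a) - (y + b) * int s = (a - b * int s) + (x - y * int s)" by (simp add: algebra_simps)
  show ?thesis unfolding dark_iff e using assms[unfolded dark_iff] by (rule dvd_add_right_iff)
qed

lemma dark_reflect:
  assumes "dk a b" shows "dk (a - x) (b - y) \<longleftrightarrow> dk x y"
proof -
  have e: "(a - x) - (b - y) * int s = (a - b * int s) - (x - y * int s)" by (simp add: algebra_simps)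
  show ?thesis unfolding dark_iff e using assms[unfolded dark_iff] by (rule dvd_diff_right_iff)
qed

lemma dark_lattice: "dk a b \<longleftrightarrow> (\<exists>m k. a = m*P + k*Q \<and> b = m*P - k*Q)"
proof
  assume "dk a b"
  then have d: "int n dvd a - b * int s" by (simp add: dark_iff)
  have "2*P dvd int n" "2*Q dvd int n" unfolding n_eq[symmetric] by simp_all
  then have "2*P dvd a - b * int s" "2*Q dvd a - b * int s" using d by (auto intro: dvd_trans)
  then have "2*P dvd (a - b * int s) + b * (int s + 1)" "2*Q dvd (a - b * int s) + b * (int s - 1)"
    using P_dvd Q_dvd by simp_all
  moreover have "(a - b * int s) + b * (int s + 1) = a + b" "(a - b * int s) + b * (int s - 1) = a - b"
    by (simp_all add: algebra_simps)
  ultimately have "2*P dvd a + b" "2*Q dvd a - b" by simp_all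
  then obtain m k where m: "a + b = 2*P*m" and k: "a - b = 2*Q*k" by (meson dvdE)
  have "a = m*P + k*Q \<and> b = m*P - k*Q" using m k by (simp add: algebra_simps)
  then show "\<exists>m k. a = m*P + k*Q \<and> b = m*P - k*Q" by blast
next
  assume "\<exists>m k. a = m*P + k*Q \<and> b = m*P - k*Q"
  then obtain m k where mk: "a = m*P + k*Q" "b = m*P - k*Q" by blast
  obtain q1 q2 where q1: "int s + 1 = 2*P*q1" and q2: "int s - 1 = 2*Q*q2"
    using P_dvd Q_dvd by (meson dvdE)
  have "a - b * int s = k * (Q * (int s + 1)) - m * (P * (int s - 1))"
    unfolding mk by (simp add: algebra_simps)
  also have "\<dots> = int n * (k * q1 - m * q2)" unfolding q1 q2 n_eq[symmetric] by (simp add: algebra_simps)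
  finally show "dk a b" by (simp add: dark_iff)
qed

text \<open>The test cells used to identify the symmetries.\<close>
lemma dark_origin: "dk 0 0" and dark_s_1: "dk (int s) 1"
  and pale_1_0: "\<not> dk 1 0" and pale_2_0: "\<not> dk 2 0"
  using n_not_dvd_1 n_not_dvd_2 by (simp_all add: dark_iff)

text \<open>A symmetry whose cell map sends the adjacent cells (1,0), (2,0) to adjacent cells preserves
  colours: both cells are pale, so reversing colours would create two adjacent dark cells.\<close>
lemma colour_preserved:
  assumes sym: "is_symmetry dk g flip" and img: "\<And>i j. g ` cell i j = cell (fi i j) (fj i j)"
    and adj: "\<bar>fi 2 0 - fi 1 0\<bar> + \<bar>fj 2 0 - fj 1 0\<bar> = 1"
  shows "flip = swaps_strands g" and "dk (fi i j) (fj i j) \<longleftrightarrow> dk i j"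
proof -
  have rule: "dk (fi i j) (fj i j) \<longleftrightarrow> (dk i j \<noteq> (swaps_strands g \<noteq> flip))" for i j
    by (rule symmetry_cell_rule[OF sym img])
  show "flip = swaps_strands g"
  proof (rule ccontr)
    assume "flip \<noteq> swaps_strands g"
    then have "dk (fi 1 0) (fj 1 0)" "dk (fi 2 0) (fj 2 0)" using rule pale_1_0 pale_2_0 by auto
    then show False using adj no_adjacent_dark by blast
  qed
  then show "dk (fi i j) (fj i j) \<longleftrightarrow> dk i j" using rule by simp
qed

text \<open>Consequently the dark cell (0,0) goes to a dark cell, i.e. to a lattice point \<dots>\<close>
lemma symmetry_origin_in_lattice:
  assumes "is_symmetry dk g flip" and "\<And>i j. g ` cell i j = cell (fi i j) (fj i j)"
    and "\<bar>fi 2 0 - fi 1 0\<bar> + \<bar>fj 2 0 - fj 1 0\<bar> = 1"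
  shows "flip = swaps_strands g \<and> (\<exists>m k. fi 0 0 = m*P + k*Q \<and> fj 0 0 = m*P - k*Q)"
  using colour_preserved[OF assms] dark_origin dark_lattice by auto

text \<open>\<dots> and so does the dark cell (s,1); this excludes the four linear parts that would move the
  difference (s,1) to a vector violating the satin congruence.\<close>
lemma symmetry_offset_impossible:
  assumes "is_symmetry dk g flip" and "\<And>i j. g ` cell i j = cell (fi i j) (fj i j)"
    and "\<bar>fi 2 0 - fi 1 0\<bar> + \<bar>fj 2 0 - fj 1 0\<bar> = 1"
    and "(fi (int s) 1 - fi 0 0) - (fj (int s) 1 - fj 0 0) * int s
           \<in> {2 * int s, - (2 * int s), int s ^ 2 + 1, - (int s ^ 2 + 1)}"
  shows False
proof -
  have d0: "dk (fi 0 0) (fj 0 0)" and d1: "dk (fi (int s) 1) (fj (int s) 1)"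
    using colour_preserved(2)[OF assms(1-3)] dark_origin dark_s_1 by auto
  define offset where "offset = (fi (int s) 1 - fi 0 0) - (fj (int s) 1 - fj 0 0) * int s"
  have "int n dvd offset" unfolding offset_def using d0 d1 by (rule dark_diff)
  moreover have "offset = 2 * int s \<or> offset = - (2 * int s) \<or> offset = int s ^ 2 + 1 \<or> offset = - (int s ^ 2 + 1)"
    using assms(4) unfolding offset_def[symmetric] by blast
  ultimately have "int n dvd 2 * int s \<or> int n dvd int s ^ 2 + 1"
    by (elim disjE) (simp_all only: dvd_minus_iff simp_thms)
  have "\<not> int n dvd int s ^ 2 + 1"
  proof
    assume "int n dvd int s ^ 2 + 1"
    then have "int n dvd (int s ^ 2 + 1) - (int s ^ 2 - 1)" using n_dvd_s_squared by (rule dvd_diff)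
    then show False using n_not_dvd_2 by simp
  qed
  then show False using \<open>int n dvd 2 * int s \<or> int n dvd int s ^ 2 + 1\<close> n_not_dvd_2s by blast
qed

lemma symmetry_linear_part:
  assumes sym: "is_symmetry dk (\<lambda>z. \<rho> z + Complex (of_int a) (of_int b)) flip"
    and \<rho>: "\<rho> \<in> square_symmetries"
  shows "\<rho> \<in> {(\<lambda>z. z), (\<lambda>z. - z), (\<lambda>z. \<i> * cnj z), (\<lambda>z. - \<i> * cnj z)}"
  using \<rho> unfolding square_symmetries_def
proof (elim insertE emptyE)
  assume "\<rho> = cnj"
  then have "is_symmetry dk (\<lambda>z. cnj z + Complex (of_int a) (of_int b)) flip" using sym by simp
  from symmetry_offset_impossible[OF this cell_image_cnj] show ?thesis by simp
next
  assume "\<rho> = (\<lambda>z. - cnj z)"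
  then have "is_symmetry dk (\<lambda>z. - cnj z + Complex (of_int a) (of_int b)) flip" using sym by simp
  from symmetry_offset_impossible[OF this cell_image_neg_cnj] show ?thesis by simp
next
  assume "\<rho> = (\<lambda>z. \<i> * z)"
  then have "is_symmetry dk (\<lambda>z. \<i> * z + Complex (of_int a) (of_int b)) flip" using sym by simp
  from symmetry_offset_impossible[OF this cell_image_i] show ?thesis
    by (simp add: algebra_simps power2_eq_square)
next
  assume "\<rho> = (\<lambda>z. - \<i> * z)"
  then have "is_symmetry dk (\<lambda>z. - \<i> * z + Complex (of_int a) (of_int b)) flip" using sym by simp
  from symmetry_offset_impossible[OF this cell_image_neg_i] show ?thesis
    by (simp add: algebra_simps power2_eq_square)
qed simp_all

text \<open>The lower-left corner of the dark cell with lattice coordinates (m,k).\<close>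
definition lattice_pt :: "int \<Rightarrow> int \<Rightarrow> complex" where
  "lattice_pt m k = Complex (of_int (m*P + k*Q)) (of_int (m*P - k*Q))"

text \<open>The four families of symmetries of the satin: lattice translations, half-turns, and
  reflections or glide reflections along the diagonal and the anti-diagonal.\<close>
definition tr :: "int \<Rightarrow> int \<Rightarrow> complex \<Rightarrow> complex" where
  "tr m k = (\<lambda>z. z + lattice_pt m k)"
definition rot :: "int \<Rightarrow> int \<Rightarrow> complex \<Rightarrow> complex" where
  "rot m k = (\<lambda>z. - z + (1 + \<i> + lattice_pt m k))"
definition glide_diag :: "int \<Rightarrow> int \<Rightarrow> complex \<Rightarrow> complex" where
  "glide_diag m k = (\<lambda>z. \<i> * cnj z + lattice_pt m k)"
definition glide_anti :: "int \<Rightarrow> int \<Rightarrow> complex \<Rightarrow> complex" where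
  "glide_anti m k = (\<lambda>z. - \<i> * cnj z + (1 + \<i> + lattice_pt m k))"

text \<open>They will turn out to be H1 and the complement of H1 in G1, respectively.\<close>
definition side_preserving :: "(complex \<Rightarrow> complex) set" where
  "side_preserving = (\<Union>m k. {tr m k, rot m k})"
definition side_reversing :: "(complex \<Rightarrow> complex) set" where
  "side_reversing = (\<Union>m k. {glide_diag m k, glide_anti m k})"

lemma tr_eq: "tr m k = (\<lambda>z. z + Complex (of_int (m*P + k*Q)) (of_int (m*P - k*Q)))"
  by (simp add: tr_def lattice_pt_def)
lemma rot_eq: "rot m k = (\<lambda>z. - z + Complex (of_int (1 + m*P + k*Q)) (of_int (1 + m*P - k*Q)))"
  by (simp add: rot_def lattice_pt_def fun_eq_iff complex_eq_iff)
lemma glide_diag_eq: "glide_diag m k = (\<lambda>z. \<i> * cnj z + Complex (of_int (m*P + k*Q)) (of_int (m*P - k*Q)))"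
  by (simp add: glide_diag_def lattice_pt_def)
lemma glide_anti_eq:
  "glide_anti m k = (\<lambda>z. - \<i> * cnj z + Complex (of_int (1 + m*P + k*Q)) (of_int (1 + m*P - k*Q)))"
  by (simp add: glide_anti_def lattice_pt_def fun_eq_iff complex_eq_iff)

lemma swaps_strands_syms:
  "\<not> swaps_strands (tr m k)" "\<not> swaps_strands (rot m k)"
  "swaps_strands (glide_diag m k)" "swaps_strands (glide_anti m k)"
  by (simp_all add: swaps_strands_def tr_def rot_def glide_diag_def glide_anti_def)

lemma symmetry_with_identity_part:
  assumes "is_symmetry dk (\<lambda>z. z + Complex (of_int a) (of_int b)) flip"
  shows "\<not> flip \<and> (\<lambda>z. z + Complex (of_int a) (of_int b)) \<in> side_preserving"
proof -
  obtain m k where "\<not> flip" "a = m*P + k*Q" "b = m*P - k*Q"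
    using symmetry_origin_in_lattice[OF assms cell_image_id] by (auto simp: swaps_strands_def)
  then have "(\<lambda>z. z + Complex (of_int a) (of_int b)) = tr m k" by (simp add: tr_eq)
  with \<open>\<not> flip\<close> show ?thesis unfolding side_preserving_def by blast
qed

lemma symmetry_with_negation_part:
  assumes "is_symmetry dk (\<lambda>z. - z + Complex (of_int a) (of_int b)) flip"
  shows "\<not> flip \<and> (\<lambda>z. - z + Complex (of_int a) (of_int b)) \<in> side_preserving"
proof -
  obtain m k where "\<not> flip" "a - 1 = m*P + k*Q" "b - 1 = m*P - k*Q"
    using symmetry_origin_in_lattice[OF assms cell_image_neg] by (auto simp: swaps_strands_def)
  then have "a = 1 + m*P + k*Q" "b = 1 + m*P - k*Q" by simp_all
  then have "(\<lambda>z. - z + Complex (of_int a) (of_int b)) = rot m k" by (simp add: rot_eq)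
  with \<open>\<not> flip\<close> show ?thesis unfolding side_preserving_def by blast
qed

lemma symmetry_with_diagonal_part:
  assumes "is_symmetry dk (\<lambda>z. \<i> * cnj z + Complex (of_int a) (of_int b)) flip"
  shows "flip \<and> (\<lambda>z. \<i> * cnj z + Complex (of_int a) (of_int b)) \<in> side_reversing"
proof -
  obtain m k where "flip" "a = m*P + k*Q" "b = m*P - k*Q"
    using symmetry_origin_in_lattice[OF assms cell_image_i_cnj] by (auto simp: swaps_strands_def)
  then have "(\<lambda>z. \<i> * cnj z + Complex (of_int a) (of_int b)) = glide_diag m k"
    by (simp add: glide_diag_eq)
  with \<open>flip\<close> show ?thesis unfolding side_reversing_def by blast
qed

lemma symmetry_with_antidiagonal_part:
  assumes "is_symmetry dk (\<lambda>z. - \<i> * cnj z + Complex (of_int a) (of_int b)) flip"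
  shows "flip \<and> (\<lambda>z. - \<i> * cnj z + Complex (of_int a) (of_int b)) \<in> side_reversing"
proof -
  obtain m k where "flip" "a - 1 = m*P + k*Q" "b - 1 = m*P - k*Q"
    using symmetry_origin_in_lattice[OF assms cell_image_neg_i_cnj] by (auto simp: swaps_strands_def)
  then have "a = 1 + m*P + k*Q" "b = 1 + m*P - k*Q" by simp_all
  then have "(\<lambda>z. - \<i> * cnj z + Complex (of_int a) (of_int b)) = glide_anti m k"
    by (simp add: glide_anti_eq)
  with \<open>flip\<close> show ?thesis unfolding side_reversing_def by blast
qed

theorem symmetry_classification:
  assumes sym: "is_symmetry dk g flip"
  shows "g \<in> side_preserving \<and> \<not> flip \<or> g \<in> side_reversing \<and> flip"
proof -
  from sym obtain i' j' where iso: "isometry g" and cel: "g ` cell 0 0 = cell i' j'"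
    unfolding is_symmetry_def by blast
  obtain \<rho> a b where \<rho>: "\<rho> \<in> square_symmetries"
    and g: "g = (\<lambda>z. \<rho> z + Complex (of_int a) (of_int b))"
    by (rule grid_isometry_form[OF iso cel])
  let ?c = "Complex (of_int a) (of_int b)"
  have sym': "is_symmetry dk (\<lambda>z. \<rho> z + ?c) flip" using sym g by simp
  from symmetry_linear_part[OF sym' \<rho>]
  consider "\<rho> = (\<lambda>z. z)" | "\<rho> = (\<lambda>z. - z)" | "\<rho> = (\<lambda>z. \<i> * cnj z)" | "\<rho> = (\<lambda>z. - \<i> * cnj z)"
    by blast
  then show ?thesis
  proof cases
    case 1
    then have "is_symmetry dk (\<lambda>z. z + ?c) flip" using sym' by simp
    from symmetry_with_identity_part[OF this] show ?thesis using g 1 by simp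
  next
    case 2
    then have "is_symmetry dk (\<lambda>z. - z + ?c) flip" using sym' by simp
    from symmetry_with_negation_part[OF this] show ?thesis using g 2 by simp
  next
    case 3
    then have "is_symmetry dk (\<lambda>z. \<i> * cnj z + ?c) flip" using sym' by simp
    from symmetry_with_diagonal_part[OF this] show ?thesis using g 3 by simp
  next
    case 4
    then have "is_symmetry dk (\<lambda>z. - \<i> * cnj z + ?c) flip" using sym' by simp
    from symmetry_with_antidiagonal_part[OF this] show ?thesis using g 4 by simp
  qed
qed

lemma dark_lattice_pt: "dk (m*P + k*Q) (m*P - k*Q)"
  using dark_lattice by blast

lemma tr_symmetry: "is_symmetry dk (tr m k) False"
proof -
  have "is_symmetry dk (tr m k) (swaps_strands (tr m k))"
    unfolding tr_eq
  proof (rule symmetry_of_cell_rule[where fi="\<lambda>i j. i + (m*P + k*Q)" and fj="\<lambda>i j. j + (m*P - k*Q)"])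
    show "isometry (\<lambda>z. z + Complex (of_int (m*P + k*Q)) (of_int (m*P - k*Q)))"
      using isometry_rotation[of 1] by (simp del: of_int_add of_int_diff)
    show "(\<lambda>z. z + Complex (of_int (m*P + k*Q)) (of_int (m*P - k*Q))) ` cell i j
        = cell (i + (m*P + k*Q)) (j + (m*P - k*Q))" for i j
      by (rule cell_image_id)
    show "dk (i + (m*P + k*Q)) (j + (m*P - k*Q)) \<longleftrightarrow> dk i j" for i j
      by (rule dark_translate[OF dark_lattice_pt])
  qed
  then show ?thesis using swaps_strands_syms by simp
qed

lemma rot_symmetry: "is_symmetry dk (rot m k) False"
proof -
  have "is_symmetry dk (rot m k) (swaps_strands (rot m k))"
    unfolding rot_eq
  proof (rule symmetry_of_cell_rule[where fi="\<lambda>i j. (m*P + k*Q) - i" and fj="\<lambda>i j. (m*P - k*Q) - j"])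
    show "isometry (\<lambda>z. - z + Complex (of_int (1 + m*P + k*Q)) (of_int (1 + m*P - k*Q)))"
      using isometry_rotation[of "-1"] by (simp del: of_int_add of_int_diff)
    show "(\<lambda>z. - z + Complex (of_int (1 + m*P + k*Q)) (of_int (1 + m*P - k*Q))) ` cell i j
        = cell (m*P + k*Q - i) (m*P - k*Q - j)" for i j
      using cell_image_neg[of "1 + m*P + k*Q" "1 + m*P - k*Q" i j] by (simp del: of_int_add of_int_diff)
    show "dk (m*P + k*Q - i) (m*P - k*Q - j) \<longleftrightarrow> dk i j" for i j
      by (rule dark_reflect[OF dark_lattice_pt])
  qed
  then show ?thesis using swaps_strands_syms by simp
qed

lemma glide_diag_symmetry: "is_symmetry dk (glide_diag m k) True"
proof -
  have "is_symmetry dk (glide_diag m k) (swaps_strands (glide_diag m k))"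
    unfolding glide_diag_eq
  proof (rule symmetry_of_cell_rule[where fi="\<lambda>i j. (m*P + k*Q) + j" and fj="\<lambda>i j. (m*P - k*Q) + i"])
    show "isometry (\<lambda>z. \<i> * cnj z + Complex (of_int (m*P + k*Q)) (of_int (m*P - k*Q)))"
      by (rule isometry_reflection) simp
    show "(\<lambda>z. \<i> * cnj z + Complex (of_int (m*P + k*Q)) (of_int (m*P - k*Q))) ` cell i j
        = cell ((m*P + k*Q) + j) ((m*P - k*Q) + i)" for i j
      by (rule cell_image_i_cnj)
    show "dk ((m*P + k*Q) + j) ((m*P - k*Q) + i) \<longleftrightarrow> dk i j" for i j
    proof -
      have "dk ((m*P + k*Q) + j) ((m*P - k*Q) + i) \<longleftrightarrow> dk (j + (m*P + k*Q)) (i + (m*P - k*Q))"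
        by (simp only: add.commute)
      also have "\<dots> \<longleftrightarrow> dk j i" by (rule dark_translate[OF dark_lattice_pt])
      also have "\<dots> \<longleftrightarrow> dk i j" by (rule dark_symmetric)
      finally show ?thesis .
    qed
  qed
  then show ?thesis using swaps_strands_syms by simp
qed

lemma glide_anti_symmetry: "is_symmetry dk (glide_anti m k) True"
proof -
  have "is_symmetry dk (glide_anti m k) (swaps_strands (glide_anti m k))"
    unfolding glide_anti_eq
  proof (rule symmetry_of_cell_rule[where fi="\<lambda>i j. (m*P + k*Q) - j" and fj="\<lambda>i j. (m*P - k*Q) - i"])
    show "isometry (\<lambda>z. - \<i> * cnj z + Complex (of_int (1 + m*P + k*Q)) (of_int (1 + m*P - k*Q)))"
      by (rule isometry_reflection) simp
    show "(\<lambda>z. - \<i> * cnj z + Complex (of_int (1 + m*P + k*Q)) (of_int (1 + m*P - k*Q))) ` cell i j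
        = cell (m*P + k*Q - j) (m*P - k*Q - i)" for i j
      using cell_image_neg_i_cnj[of "1 + m*P + k*Q" "1 + m*P - k*Q" i j]
      by (simp del: of_int_add of_int_diff)
    show "dk (m*P + k*Q - j) (m*P - k*Q - i) \<longleftrightarrow> dk i j" for i j
      using dark_reflect[OF dark_lattice_pt] dark_symmetric by (rule trans)
  qed
  then show ?thesis using swaps_strands_syms by simp
qed

lemma side_preserving_symmetry: "g \<in> side_preserving \<Longrightarrow> is_symmetry dk g False"
  unfolding side_preserving_def using tr_symmetry rot_symmetry by blast

lemma side_reversing_symmetry: "g \<in> side_reversing \<Longrightarrow> is_symmetry dk g True"
  unfolding side_reversing_def using glide_diag_symmetry glide_anti_symmetry by blast

lemma swaps_strands_side_preserving: "g \<in> side_preserving \<Longrightarrow> \<not> swaps_strands g"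
  unfolding side_preserving_def using swaps_strands_syms by auto

lemma swaps_strands_side_reversing: "g \<in> side_reversing \<Longrightarrow> swaps_strands g"
  unfolding side_reversing_def using swaps_strands_syms by auto

lemma H1_eq: "H1 dk = side_preserving"
proof
  show "H1 dk \<subseteq> side_preserving"
    unfolding H1_def using symmetry_classification[where flip=False] by auto
  show "side_preserving \<subseteq> H1 dk"
    unfolding H1_def using side_preserving_symmetry by auto
qed

lemma G1_eq: "G1 dk = side_preserving \<union> side_reversing"
proof
  show "G1 dk \<subseteq> side_preserving \<union> side_reversing"
    unfolding G1_def using symmetry_classification by blast
  show "side_preserving \<union> side_reversing \<subseteq> G1 dk"
    unfolding G1_def using side_preserving_symmetry side_reversing_symmetry by blast
qed

end

section \<open>The crystallographic types of G1 and H1\<close>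

context satin_factorisation
begin

text \<open>The affine change of coordinates taking the standard lattice Z[i] to the lattice of
  half-turn centres; it conjugates the standard groups onto the satin groups.\<close>
definition to_satin :: "complex \<Rightarrow> complex" where
  "to_satin w = Complex (1/2 + Re w * of_int P + Im w * of_int Q) (1/2 + Re w * of_int P - Im w * of_int Q)"

definition from_satin :: "complex \<Rightarrow> complex" where
  "from_satin z = Complex ((Re z + Im z - 1) / (2 * of_int P)) ((Re z - Im z) / (2 * of_int Q))"

lemma to_from_satin: "to_satin (from_satin z) = z" and from_to_satin: "from_satin (to_satin z) = z"
  using P_pos Q_pos by (simp_all add: to_satin_def from_satin_def complex_eq_iff field_simps)

lemma real_affine_to_satin: "real_affine to_satin"
  unfolding real_affine_def
  by (rule exI[of _ "Complex ((of_int P - of_int Q)/2) ((of_int P - of_int Q)/2)"],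
      rule exI[of _ "Complex ((of_int P + of_int Q)/2) ((of_int P + of_int Q)/2)"],
      rule exI[of _ "Complex (1/2) (1/2)"])
     (simp add: to_satin_def complex_eq_iff field_simps)

lemma conjugate_std:
  "to_satin \<circ> (\<lambda>z. z + (of_int m + of_int k * \<i>)) \<circ> from_satin = tr m k"
  "to_satin \<circ> (\<lambda>z. - z + (of_int m + of_int k * \<i>)) \<circ> from_satin = rot m k"
  "to_satin \<circ> (\<lambda>z. cnj z + (of_int m + of_int k * \<i>)) \<circ> from_satin = glide_diag m k"
  "to_satin \<circ> (\<lambda>z. - cnj z + (of_int m + of_int k * \<i>)) \<circ> from_satin = glide_anti m k"
  using P_pos Q_pos
  by (simp_all add: fun_eq_iff to_satin_def from_satin_def tr_def rot_def glide_diag_def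
      glide_anti_def lattice_pt_def complex_eq_iff field_simps)

lemma conjugate_pmm_std:
  "(\<lambda>f. to_satin \<circ> f \<circ> from_satin) ` pmm_std = side_preserving \<union> side_reversing"
proof (intro equalityI subsetI)
  fix g assume "g \<in> (\<lambda>f. to_satin \<circ> f \<circ> from_satin) ` pmm_std"
  then obtain p m k where p: "p \<in> {(\<lambda>w. w), (\<lambda>w. - w), cnj, (\<lambda>w. - cnj w)}"
    and g: "g = to_satin \<circ> (\<lambda>z. p z + (of_int m + of_int k * \<i>)) \<circ> from_satin"
    unfolding pmm_std_def gauss_ints_def by blast
  from p have "g = tr m k \<or> g = rot m k \<or> g = glide_diag m k \<or> g = glide_anti m k"
    by (elim insertE emptyE) (simp_all only: g conjugate_std simp_thms)
  then show "g \<in> side_preserving \<union> side_reversing"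
    unfolding side_preserving_def side_reversing_def by blast
next
  fix g assume "g \<in> side_preserving \<union> side_reversing"
  then obtain m k where "g = tr m k \<or> g = rot m k \<or> g = glide_diag m k \<or> g = glide_anti m k"
    unfolding side_preserving_def side_reversing_def by blast
  moreover have "(\<lambda>z. p z + (of_int m + of_int k * \<i>)) \<in> pmm_std"
    if "p \<in> {(\<lambda>w. w), (\<lambda>w. - w), cnj, (\<lambda>w. - cnj w)}" for p
    unfolding pmm_std_def gauss_ints_def using that
    by (intro CollectI exI[of _ p] exI[of _ "of_int m + of_int k * \<i>"]) blast
  ultimately show "g \<in> (\<lambda>f. to_satin \<circ> f \<circ> from_satin) ` pmm_std"
    unfolding conjugate_std[symmetric] by blast
qed

lemma conjugate_p2_std: "(\<lambda>f. to_satin \<circ> f \<circ> from_satin) ` p2_std = side_preserving"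
proof (intro equalityI subsetI)
  fix g assume "g \<in> (\<lambda>f. to_satin \<circ> f \<circ> from_satin) ` p2_std"
  then obtain p m k where p: "p \<in> {(\<lambda>w. w), (\<lambda>w. - w)}"
    and g: "g = to_satin \<circ> (\<lambda>z. p z + (of_int m + of_int k * \<i>)) \<circ> from_satin"
    unfolding p2_std_def gauss_ints_def by blast
  from p have "g = tr m k \<or> g = rot m k"
    by (elim insertE emptyE) (simp_all only: g conjugate_std simp_thms)
  then show "g \<in> side_preserving" unfolding side_preserving_def by blast
next
  fix g assume "g \<in> side_preserving"
  then obtain m k where "g = tr m k \<or> g = rot m k" unfolding side_preserving_def by blast
  moreover have "(\<lambda>z. p z + (of_int m + of_int k * \<i>)) \<in> p2_std" if "p \<in> {(\<lambda>w. w), (\<lambda>w. - w)}" for p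
    unfolding p2_std_def gauss_ints_def using that
    by (intro CollectI exI[of _ p] exI[of _ "of_int m + of_int k * \<i>"]) blast
  ultimately show "g \<in> (\<lambda>f. to_satin \<circ> f \<circ> from_satin) ` p2_std"
    unfolding conjugate_std[symmetric] by blast
qed

lemma type_pmm_G1: "type_pmm (G1 dk)"
  unfolding type_pmm_def same_type_def G1_eq conjugate_pmm_std[symmetric]
  using real_affine_to_satin from_to_satin to_from_satin by blast

lemma type_p2_H1: "type_p2 (H1 dk)"
  unfolding type_p2_def same_type_def H1_eq conjugate_p2_std[symmetric]
  using real_affine_to_satin from_to_satin to_from_satin by blast

end

lemma mem_line_diag: "z \<in> line_dir a (1 + \<i>) \<longleftrightarrow> Re z - Im z = Re a - Im a"
proof
  assume "z \<in> line_dir a (1 + \<i>)"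
  then obtain x where "z = a + of_real x * (1 + \<i>)" unfolding line_dir_def by blast
  then show "Re z - Im z = Re a - Im a" by simp
next
  assume h: "Re z - Im z = Re a - Im a"
  have "z = a + of_real (Im z - Im a) * (1 + \<i>)" using h by (simp add: complex_eq_iff)
  then show "z \<in> line_dir a (1 + \<i>)" unfolding line_dir_def by blast
qed

lemma mem_line_antidiag: "z \<in> line_dir a (1 - \<i>) \<longleftrightarrow> Re z + Im z = Re a + Im a"
proof
  assume "z \<in> line_dir a (1 - \<i>)"
  then obtain x where "z = a + of_real x * (1 - \<i>)" unfolding line_dir_def by blast
  then show "Re z + Im z = Re a + Im a" by simp
next
  assume h: "Re z + Im z = Re a + Im a"
  have "z = a + of_real (Im a - Im z) * (1 - \<i>)" using h by (simp add: complex_eq_iff)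
  then show "z \<in> line_dir a (1 - \<i>)" unfolding line_dir_def by blast
qed

lemma half_point_centre_iff:
  assumes "even (A - B)"
  shows "is_cell_centre (Complex ((1 + of_int A)/2) ((1 + of_int B)/2)) \<longleftrightarrow> even A"
proof
  assume "is_cell_centre (Complex ((1 + of_int A)/2) ((1 + of_int B)/2))"
  then obtain i :: int where "(1 + real_of_int A)/2 = of_int i + 1/2"
    unfolding is_cell_centre_def by auto
  then have "real_of_int A = real_of_int (2*i)" by simp
  then show "even A" by (simp only: of_int_eq_iff) simp
next
  assume "even A"
  moreover have "even B" using \<open>even A\<close> assms by simp
  ultimately obtain x y where "A = 2*x" "B = 2*y" by (auto elim!: evenE)
  then have "Complex ((1 + of_int A)/2) ((1 + of_int B)/2) = Complex (of_int x + 1/2) (of_int y + 1/2)"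
    by (simp add: field_simps)
  then show "is_cell_centre (Complex ((1 + of_int A)/2) ((1 + of_int B)/2))"
    unfolding is_cell_centre_def by blast
qed

lemma half_point_corner_iff:
  assumes "even (A - B)"
  shows "is_cell_corner (Complex ((1 + of_int A)/2) ((1 + of_int B)/2)) \<longleftrightarrow> odd A"
proof
  assume "is_cell_corner (Complex ((1 + of_int A)/2) ((1 + of_int B)/2))"
  then obtain i :: int where "(1 + real_of_int A)/2 = of_int i"
    unfolding is_cell_corner_def by auto
  then have "real_of_int (A + 1) = real_of_int (2*i)" by simp
  then have "A + 1 = 2*i" by (simp only: of_int_eq_iff)
  then show "odd A" by presburger
next
  assume "odd A"
  moreover have "odd B" using \<open>odd A\<close> assms by simp
  ultimately obtain x y where "A = 2*x + 1" "B = 2*y + 1" by (auto elim!: oddE)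
  then have "Complex ((1 + of_int A)/2) ((1 + of_int B)/2) = Complex (of_int (x+1)) (of_int (y+1))"
    by (simp add: field_simps)
  then show "is_cell_corner (Complex ((1 + of_int A)/2) ((1 + of_int B)/2))"
    unfolding is_cell_corner_def by blast
qed

lemma int_strictly_between:
  fixes m1 m2 :: int
  assumes "m1 \<noteq> m2" "m2 \<noteq> m1 + 1" "m1 \<noteq> m2 + 1"
  obtains m3 :: int and u :: real
  where "0 < u" "u < 1" "real_of_int m3 = of_int m1 + u * (of_int m2 - of_int m1)"
proof (cases "m1 < m2")
  case True
  then have p: "real_of_int m2 - of_int m1 \<ge> 2" using assms by linarith
  show ?thesis
    by (rule that[of "1 / (of_int m2 - of_int m1)" "m1 + 1"]) (use p in simp_all)
next
  case False
  then have p: "real_of_int m1 - of_int m2 \<ge> 2" using assms by linarith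
  have "1 / (real_of_int m1 - of_int m2) * (of_int m2 - of_int m1) = -1"
    using p by (simp add: field_simps)
  then show ?thesis
    by (intro that[of "1 / (of_int m1 - of_int m2)" "m1 - 1"]) (use p in simp_all)
qed

lemma alternating_on_progression:
  fixes f :: "int \<Rightarrow> complex" and E :: "int \<Rightarrow> bool"
  assumes CL: "C \<inter> l = range f" and f: "\<And>m. f m = b + of_int m * w"
    and cen: "\<And>m. is_cell_centre (f m) \<longleftrightarrow> E m" and cor: "\<And>m. is_cell_corner (f m) \<longleftrightarrow> \<not> E m"
    and E: "\<And>m. E (m+1) \<longleftrightarrow> \<not> E m"
  shows "alternating_on C l"
  unfolding alternating_on_def
proof (intro conjI ballI impI)
  show "C \<inter> l \<noteq> {}" using CL by auto
next
  fix c assume "c \<in> C \<inter> l"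
  then show "is_cell_centre c \<or> is_cell_corner c" using CL cen cor by auto
next
  fix c1 c2 assume c1: "c1 \<in> C \<inter> l" and c2: "c2 \<in> C \<inter> l" and ne: "c1 \<noteq> c2"
    and nb: "\<not> (\<exists>c\<in>C \<inter> l. strictly_between c1 c2 c)"
  obtain m1 m2 where m1: "c1 = f m1" and m2: "c2 = f m2" using c1 c2 CL by auto
  have "m2 = m1 + 1 \<or> m1 = m2 + 1"
  proof (rule ccontr)
    assume "\<not> (m2 = m1 + 1 \<or> m1 = m2 + 1)"
    moreover have "m1 \<noteq> m2" using ne m1 m2 by auto
    ultimately obtain m3 u where u: "0 < u" "u < 1"
      and m3: "real_of_int m3 = of_int m1 + u * (of_int m2 - of_int m1)"
      using int_strictly_between by blast
    have m3c: "(of_int m3 :: complex) = of_int m1 + of_real u * (of_int m2 - of_int m1)"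
      using arg_cong[OF m3, of "of_real :: real \<Rightarrow> complex"] by simp
    have "f m3 = f m1 + of_real u * (f m2 - f m1)" unfolding f m3c by (simp add: algebra_simps)
    then have "strictly_between c1 c2 (f m3)" unfolding strictly_between_def m1 m2 using u by blast
    moreover have "f m3 \<in> C \<inter> l" using CL by auto
    ultimately show False using nb by blast
  qed
  then show "(is_cell_centre c1 \<and> is_cell_corner c2) \<or> (is_cell_corner c1 \<and> is_cell_centre c2)"
    unfolding m1 m2 cen cor using E[of m1] E[of m2] by auto
qed

lemma affine_strictly_between:
  fixes \<alpha> \<beta> :: real
  assumes "a < c" "c < b" "\<beta> \<noteq> 0"
  shows "min (\<alpha> + \<beta> * of_int a) (\<alpha> + \<beta> * of_int b) < \<alpha> + \<beta> * of_int c \<and>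
         \<alpha> + \<beta> * of_int c < max (\<alpha> + \<beta> * of_int a) (\<alpha> + \<beta> * of_int b)"
proof -
  have ac: "real_of_int a < of_int c" and cb: "real_of_int c < of_int b" using assms by simp_all
  show ?thesis
  proof (cases "\<beta> > 0")
    case True
    then have "\<beta> * of_int a < \<beta> * of_int c" "\<beta> * of_int c < \<beta> * of_int b"
      using ac cb by (simp_all add: mult_strict_left_mono)
    then show ?thesis by (simp add: min_def max_def)
  next
    case False
    then have "\<beta> < 0" using assms(3) by simp
    then have "\<beta> * of_int c < \<beta> * of_int a" "\<beta> * of_int b < \<beta> * of_int c"
      using ac cb by (simp_all add: mult_strict_left_mono_neg)
    then show ?thesis by (simp add: min_def max_def)
  qed
qed

lemma adjacent_parallel_consecutive:
  assumes par: "\<And>l. l \<in> M \<Longrightarrow> parallel_to l d \<Longrightarrow> \<exists>k. l = Lk k"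
    and inM: "\<And>k. Lk k \<in> M" and parL: "\<And>k. parallel_to (Lk k) d"
    and pick: "\<And>k. pk k \<in> Lk k"
    and coord: "\<And>k z. z \<in> Lk k \<Longrightarrow> Im (cnj d * z) = \<alpha> + \<beta> * of_int k" and \<beta>: "\<beta> \<noteq> 0"
    and adj: "adjacent_parallel M d l1 l2"
  shows "\<exists>k. l1 = Lk k \<and> (l2 = Lk (k+1) \<or> l2 = Lk (k - 1))"
proof -
  let ?x = "\<lambda>k. \<alpha> + \<beta> * of_int k"
  from adj have l1: "l1 \<in> M" "parallel_to l1 d" and l2: "l2 \<in> M" "parallel_to l2 d" and ne: "l1 \<noteq> l2"
    and nex: "\<not> (\<exists>l3 \<in> M. parallel_to l3 d \<and>
          (\<exists>z1 \<in> l1. \<exists>z2 \<in> l2. \<exists>z3 \<in> l3.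
             min (Im (cnj d * z1)) (Im (cnj d * z2)) < Im (cnj d * z3) \<and>
             Im (cnj d * z3) < max (Im (cnj d * z1)) (Im (cnj d * z2))))"
    unfolding adjacent_parallel_def by blast+
  obtain k1 k2 where k1: "l1 = Lk k1" and k2: "l2 = Lk k2" using par l1 l2 by blast
  have "k2 = k1 + 1 \<or> k2 = k1 - 1"
  proof (rule ccontr)
    assume na: "\<not> (k2 = k1 + 1 \<or> k2 = k1 - 1)"
    have "k1 \<noteq> k2" using ne k1 k2 by auto
    have "\<exists>k3. min (?x k1) (?x k2) < ?x k3 \<and> ?x k3 < max (?x k1) (?x k2)"
    proof (cases "k1 < k2")
      case True
      then have "k1 < k1 + 1" "k1 + 1 < k2" using na by auto
      from affine_strictly_between[OF this \<beta>] show ?thesis by blast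
    next
      case False
      then have "k2 < k1 - 1" "k1 - 1 < k1" using na \<open>k1 \<noteq> k2\<close> by auto
      from affine_strictly_between[OF this \<beta>] show ?thesis by (metis min.commute max.commute)
    qed
    then obtain k3 where k3: "min (?x k1) (?x k2) < ?x k3 \<and> ?x k3 < max (?x k1) (?x k2)" by blast
    have "Im (cnj d * pk k) = ?x k" for k using coord pick by blast
    then have "\<exists>z1 \<in> l1. \<exists>z2 \<in> l2. \<exists>z3 \<in> Lk k3.
             min (Im (cnj d * z1)) (Im (cnj d * z2)) < Im (cnj d * z3) \<and>
             Im (cnj d * z3) < max (Im (cnj d * z1)) (Im (cnj d * z2))"
      using pick k3 unfolding k1 k2 by metis
    then show False using nex inM parL by blast
  qed
  then show ?thesis using k1 k2 by blast
qed

section \<open>Mirrors and half-turn centres of the satin\<close>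

context satin_factorisation
begin

definition diag_mirror :: "int \<Rightarrow> complex set" where
  "diag_mirror k = line_dir (of_int (k*Q)) (1 + \<i>)"
definition anti_mirror :: "int \<Rightarrow> complex set" where
  "anti_mirror m = line_dir (of_int (1 + m*P)) (1 - \<i>)"

definition centre_pt :: "int \<Rightarrow> int \<Rightarrow> complex" where
  "centre_pt m k = Complex ((1 + of_int (m*P + k*Q))/2) ((1 + of_int (m*P - k*Q))/2)"

lemma fixed_glide_diag: "{z. glide_diag 0 k z = z} = diag_mirror k"
  by (auto simp: glide_diag_def lattice_pt_def diag_mirror_def mem_line_diag complex_eq_iff)

lemma fixed_glide_anti: "{z. glide_anti m 0 z = z} = anti_mirror m"
  by (auto simp: glide_anti_def lattice_pt_def anti_mirror_def mem_line_antidiag complex_eq_iff)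

lemma is_mirror_fixing_line:
  assumes "isometry g" "swaps_strands g" "{z. g z = z} = line_dir a d" "d \<noteq> 0"
  shows "is_mirror g"
proof -
  have "g \<noteq> id" using assms(2) by (auto simp: swaps_strands_def)
  then show ?thesis unfolding is_mirror_def using assms by blast
qed

lemma is_mirror_glide_diag: "is_mirror (glide_diag 0 k)"
  using glide_diag_symmetry fixed_glide_diag swaps_strands_syms
  by (intro is_mirror_fixing_line[where a="of_int (k*Q)" and d="1 + \<i>"])
     (auto simp: is_symmetry_def diag_mirror_def complex_eq_iff)

lemma is_mirror_glide_anti: "is_mirror (glide_anti m 0)"
  using glide_anti_symmetry fixed_glide_anti swaps_strands_syms
  by (intro is_mirror_fixing_line[where a="of_int (1 + m*P)" and d="1 - \<i>"])
     (auto simp: is_symmetry_def anti_mirror_def complex_eq_iff)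

lemma satin_mirrors:
  assumes g: "g \<in> G1 dk" and mir: "is_mirror g"
  shows "(\<exists>k. g = glide_diag 0 k) \<or> (\<exists>m. g = glide_anti m 0)"
proof -
  from mir obtain a d where d0: "d \<noteq> 0" and fx: "\<forall>z \<in> line_dir a d. g z = z" and nid: "g \<noteq> id"
    unfolding is_mirror_def by blast
  have "a \<in> line_dir a d" "a + d \<in> line_dir a d"
    unfolding line_dir_def by (auto intro!: exI[of _ 0] exI[of _ 1])
  then have fa: "g a = a" and fd: "g (a + d) = a + d" using fx by blast+
  from g obtain m k where "g = tr m k \<or> g = rot m k \<or> g = glide_diag m k \<or> g = glide_anti m k"
    unfolding G1_eq side_preserving_def side_reversing_def by blast
  then show ?thesis
  proof (elim disjE)
    assume e: "g = tr m k"
    then have "lattice_pt m k = 0" using fa by (simp add: tr_def)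
    then show ?thesis using nid unfolding e tr_def by (simp add: id_def)
  next
    assume e: "g = rot m k"
    have "- a + (1 + \<i> + lattice_pt m k) = a" "- (a + d) + (1 + \<i> + lattice_pt m k) = a + d"
      using fa fd unfolding e rot_def by simp_all
    then show ?thesis using d0 by (simp add: algebra_simps)
  next
    assume e: "g = glide_diag m k"
    have "Im a + (of_int m * of_int P + of_int k * of_int Q) = Re a"
      "Re a + (of_int m * of_int P - of_int k * of_int Q) = Im a"
      using fa unfolding e by (simp_all add: glide_diag_def lattice_pt_def complex_eq_iff)
    then have "real_of_int m * of_int P = 0" by linarith
    then show ?thesis using e P_pos by auto
  next
    assume e: "g = glide_anti m k"
    have "- Im a + (1 + of_int m * of_int P + of_int k * of_int Q) = Re a"
      "- Re a + (1 + of_int m * of_int P - of_int k * of_int Q) = Im a"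
      using fa unfolding e by (simp_all add: glide_anti_def lattice_pt_def complex_eq_iff)
    then have "real_of_int k * of_int Q = 0" by linarith
    then show ?thesis using e Q_pos by auto
  qed
qed

lemma mirror_lines_eq: "mirror_lines (G1 dk) = range diag_mirror \<union> range anti_mirror"
proof (intro equalityI subsetI)
  fix l assume "l \<in> mirror_lines (G1 dk)"
  then obtain g where l: "l = {z. g z = z}" and g: "g \<in> G1 dk" "is_mirror g"
    unfolding mirror_lines_def by blast
  from satin_mirrors[OF g] show "l \<in> range diag_mirror \<union> range anti_mirror"
    using l fixed_glide_diag fixed_glide_anti by auto
next
  fix l assume "l \<in> range diag_mirror \<union> range anti_mirror"
  moreover have "glide_diag 0 k \<in> G1 dk" "glide_anti m 0 \<in> G1 dk" for m k
    unfolding G1_eq side_reversing_def by blast+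
  ultimately show "l \<in> mirror_lines (G1 dk)"
    unfolding mirror_lines_def
    using fixed_glide_diag fixed_glide_anti is_mirror_glide_diag is_mirror_glide_anti by blast
qed

lemma diag_mirror_parallel: "parallel_to (diag_mirror k) (1 + \<i>)"
  and anti_mirror_parallel: "parallel_to (anti_mirror m) (1 - \<i>)"
  unfolding parallel_to_def diag_mirror_def anti_mirror_def by blast+

lemma diag_mirror_not_parallel: "\<not> parallel_to (diag_mirror k) (1 - \<i>)"
proof
  assume "parallel_to (diag_mirror k) (1 - \<i>)"
  then obtain a where a: "diag_mirror k = line_dir a (1 - \<i>)" unfolding parallel_to_def by blast
  have "of_int (k*Q) \<in> diag_mirror k" "of_int (k*Q) + (1 + \<i>) \<in> diag_mirror k"
    unfolding diag_mirror_def mem_line_diag by simp_all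
  then show False unfolding a mem_line_antidiag by simp
qed

lemma anti_mirror_not_parallel: "\<not> parallel_to (anti_mirror m) (1 + \<i>)"
proof
  assume "parallel_to (anti_mirror m) (1 + \<i>)"
  then obtain a where a: "anti_mirror m = line_dir a (1 + \<i>)" unfolding parallel_to_def by blast
  have "of_int (1 + m*P) \<in> anti_mirror m" "of_int (1 + m*P) + (1 - \<i>) \<in> anti_mirror m"
    unfolding anti_mirror_def mem_line_antidiag by simp_all
  then show False unfolding a mem_line_diag by simp
qed

lemma mirrors_parallel_diag: "l \<in> mirror_lines (G1 dk) \<Longrightarrow> parallel_to l (1 + \<i>) \<Longrightarrow> l \<in> range diag_mirror"
  unfolding mirror_lines_eq using anti_mirror_not_parallel by blast

lemma mirrors_parallel_anti: "l \<in> mirror_lines (G1 dk) \<Longrightarrow> parallel_to l (1 - \<i>) \<Longrightarrow> l \<in> range anti_mirror"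
  unfolding mirror_lines_eq using diag_mirror_not_parallel by blast

lemma diag_mirror_coord: "z \<in> diag_mirror k \<Longrightarrow> Im (cnj (1 + \<i>) * z) = 0 + (- of_int Q) * of_int k"
  unfolding diag_mirror_def mem_line_diag by (simp add: algebra_simps)

lemma anti_mirror_coord: "z \<in> anti_mirror m \<Longrightarrow> Im (cnj (1 - \<i>) * z) = 1 + of_int P * of_int m"
  unfolding anti_mirror_def mem_line_antidiag by (simp add: algebra_simps)

lemma rot_eq_half_turn: "half_turn c = rot m k \<longleftrightarrow> c = centre_pt m k"
proof
  assume "half_turn c = rot m k"
  then have "half_turn c 0 = rot m k 0" by simp
  then show "c = centre_pt m k"
    by (simp add: half_turn_def rot_def lattice_pt_def centre_pt_def complex_eq_iff field_simps)
qed (simp add: fun_eq_iff half_turn_def rot_def lattice_pt_def centre_pt_def complex_eq_iff field_simps)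

lemma half_turn_not_tr: "half_turn c \<noteq> tr m k"
proof
  assume "half_turn c = tr m k"
  then have "half_turn c 0 = tr m k 0" "half_turn c 1 = tr m k 1" by simp_all
  then show False by (simp add: half_turn_def tr_def complex_eq_iff)
qed

lemma half_turn_centres_H1: "half_turn_centres (H1 dk) = range (case_prod centre_pt)"
  unfolding half_turn_centres_def H1_eq side_preserving_def
  using half_turn_not_tr rot_eq_half_turn by fastforce

lemma centre_pt_in_H1: "centre_pt m k \<in> half_turn_centres (H1 dk)"
  unfolding half_turn_centres_H1 by (rule range_eqI[of _ _ "(m, k)"]) simp

lemma half_turn_centres_G1: "half_turn_centres (G1 dk) = range (case_prod centre_pt)"
proof -
  have "\<not> swaps_strands (half_turn c)" for c by (simp add: swaps_strands_def half_turn_def)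
  then have "half_turn c \<notin> side_reversing" for c using swaps_strands_side_reversing by blast
  then show ?thesis
    unfolding G1_eq half_turn_centres_H1[symmetric] H1_eq half_turn_centres_def by blast
qed

lemma centre_pt_cell_centre: "is_cell_centre (centre_pt m k) \<longleftrightarrow> even (m*P + k*Q)"
  unfolding centre_pt_def by (rule half_point_centre_iff) simp

lemma centre_pt_cell_corner: "is_cell_corner (centre_pt m k) \<longleftrightarrow> odd (m*P + k*Q)"
  unfolding centre_pt_def by (rule half_point_corner_iff) simp

lemma centres_on_diag_mirror: "half_turn_centres (G1 dk) \<inter> diag_mirror k = range (\<lambda>m. centre_pt m k)"
proof -
  have "centre_pt m' k' \<in> diag_mirror k \<longleftrightarrow> k' = k" for m' k'
  proof -
    have "centre_pt m' k' \<in> diag_mirror k \<longleftrightarrow> real_of_int k' * of_int Q = of_int k * of_int Q"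
      unfolding diag_mirror_def mem_line_diag centre_pt_def by (simp add: field_simps)
    also have "\<dots> \<longleftrightarrow> k' = k" using Q_pos by simp
    finally show ?thesis .
  qed
  then show ?thesis unfolding half_turn_centres_G1 by auto
qed

lemma centres_on_anti_mirror: "half_turn_centres (G1 dk) \<inter> anti_mirror m = range (\<lambda>k. centre_pt m k)"
proof -
  have "centre_pt m' k' \<in> anti_mirror m \<longleftrightarrow> m' = m" for m' k'
  proof -
    have "centre_pt m' k' \<in> anti_mirror m \<longleftrightarrow> real_of_int m' * of_int P = of_int m * of_int P"
      unfolding anti_mirror_def mem_line_antidiag centre_pt_def by (simp add: field_simps)
    also have "\<dots> \<longleftrightarrow> m' = m" using P_pos by simp
    finally show ?thesis .
  qed
  then show ?thesis unfolding half_turn_centres_G1 by auto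
qed

text \<open>Along a diagonal mirror the centres advance by (P/2)(1+i), along an anti-diagonal one by
  (Q/2)(1-i); so they alternate between cell centres and corners iff P (resp. Q) is odd.\<close>
lemma alternating_diag_mirror:
  assumes "odd P"
  shows "alternating_on (half_turn_centres (G1 dk)) (diag_mirror k)"
proof (rule alternating_on_progression[OF centres_on_diag_mirror, where E="\<lambda>m. even (m*P + k*Q)"])
  show "centre_pt m k = centre_pt 0 k + of_int m * Complex (of_int P / 2) (of_int P / 2)" for m
    by (simp add: centre_pt_def complex_eq_iff field_simps)
  show "is_cell_centre (centre_pt m k) \<longleftrightarrow> even (m*P + k*Q)" for m
    by (rule centre_pt_cell_centre)
  show "is_cell_corner (centre_pt m k) \<longleftrightarrow> \<not> even (m*P + k*Q)" for m
    by (simp add: centre_pt_cell_corner)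
  show "even ((m+1)*P + k*Q) \<longleftrightarrow> \<not> even (m*P + k*Q)" for m
    using assms by (simp add: algebra_simps)
qed

lemma alternating_anti_mirror:
  assumes "odd Q"
  shows "alternating_on (half_turn_centres (G1 dk)) (anti_mirror m)"
proof (rule alternating_on_progression[OF centres_on_anti_mirror, where E="\<lambda>k. even (m*P + k*Q)"])
  show "centre_pt m k = centre_pt m 0 + of_int k * Complex (of_int Q / 2) (- of_int Q / 2)" for k
    by (simp add: centre_pt_def complex_eq_iff field_simps)
  show "is_cell_centre (centre_pt m k) \<longleftrightarrow> even (m*P + k*Q)" for k
    by (rule centre_pt_cell_centre)
  show "is_cell_corner (centre_pt m k) \<longleftrightarrow> \<not> even (m*P + k*Q)" for k
    by (simp add: centre_pt_cell_corner)
  show "even (m*P + (k+1)*Q) \<longleftrightarrow> \<not> even (m*P + k*Q)" for k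
    using assms by (simp add: algebra_simps)
qed

lemma diag_mirror_kind:
  assumes "even P" "odd Q"
  shows "only_centres_on (half_turn_centres (G1 dk)) (diag_mirror k) \<longleftrightarrow> even k"
    and "only_corners_on (half_turn_centres (G1 dk)) (diag_mirror k) \<longleftrightarrow> odd k"
  using assms
  by (auto simp: only_centres_on_def only_corners_on_def centres_on_diag_mirror
      centre_pt_cell_centre centre_pt_cell_corner)

lemma anti_mirror_kind:
  assumes "odd P" "even Q"
  shows "only_centres_on (half_turn_centres (G1 dk)) (anti_mirror m) \<longleftrightarrow> even m"
    and "only_corners_on (half_turn_centres (G1 dk)) (anti_mirror m) \<longleftrightarrow> odd m"
  using assms
  by (auto simp: only_centres_on_def only_corners_on_def centres_on_anti_mirror
      centre_pt_cell_centre centre_pt_cell_corner)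

end

context satin_factorisation
begin

lemma four_dvd_iff_even_factor: "4 dvd n \<longleftrightarrow> even P \<or> even Q"
proof -
  have "4 dvd n \<longleftrightarrow> int 4 dvd int n" by (rule int_dvd_int_iff[symmetric])
  also have "\<dots> \<longleftrightarrow> (4::int) dvd 2 * (P*Q)" using n_eq by (simp add: mult.assoc)
  also have "\<dots> \<longleftrightarrow> even (P*Q)" using dvd_mult_cancel_left[of 2 2 "P*Q"] by simp
  finally show ?thesis by simp
qed

text \<open>P and Q are not both even: otherwise 4 would divide both s + 1 and s - 1.\<close>
lemma P_or_Q_odd: "odd P \<or> odd Q"
proof (rule ccontr)
  assume "\<not> (odd P \<or> odd Q)"
  then have "4 dvd 2*P" "4 dvd 2*Q" by (auto elim!: evenE)
  then have "4 dvd int s + 1" "4 dvd int s - 1" using P_dvd Q_dvd by (auto intro: dvd_trans)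
  then have "(4::int) dvd (int s + 1) - (int s - 1)" by (rule dvd_diff)
  then show False by simp
qed

lemma satin_mirror_properties:
  assumes "g \<in> G1 dk" "is_mirror g"
  shows "\<exists>a. \<exists>d \<in> {1 + \<i>, 1 - \<i>}. {z. g z = z} = line_dir a d"
    and "is_symmetry dk g True" and "g \<notin> H1 dk"
proof -
  from satin_mirrors[OF assms] show "\<exists>a. \<exists>d \<in> {1 + \<i>, 1 - \<i>}. {z. g z = z} = line_dir a d"
  proof (elim disjE exE)
    fix k assume "g = glide_diag 0 k"
    then have "{z. g z = z} = line_dir (of_int (k*Q)) (1 + \<i>)"
      using fixed_glide_diag by (simp add: diag_mirror_def)
    then show ?thesis by blast
  next
    fix m assume "g = glide_anti m 0"
    then have "{z. g z = z} = line_dir (of_int (1 + m*P)) (1 - \<i>)"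
      using fixed_glide_anti by (simp add: anti_mirror_def)
    then show ?thesis by blast
  qed
  from satin_mirrors[OF assms] have "g \<in> side_reversing" unfolding side_reversing_def by blast
  then show "is_symmetry dk g True" and "g \<notin> H1 dk"
    using side_reversing_symmetry swaps_strands_side_reversing swaps_strands_side_preserving
    unfolding H1_eq by blast+
qed

lemma species26: "species26 dk"
  unfolding species26_def
proof (intro conjI)
  show "type_pmm (G1 dk)" by (rule type_pmm_G1)
  show "type_p2 (H1 dk)" by (rule type_p2_H1)
  show "\<forall>g\<in>G1 dk. is_mirror g \<longrightarrow> (\<exists>a. \<exists>d \<in> {1 + \<i>, 1 - \<i>}. {z. g z = z} = line_dir a d)"
    and "\<forall>g\<in>G1 dk. is_mirror g \<longrightarrow> is_symmetry dk g True \<and> g \<notin> H1 dk"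
    using satin_mirror_properties by blast+
  show "\<exists>c \<in> half_turn_centres (H1 dk). is_cell_centre c"
    using centre_pt_in_H1 centre_pt_cell_centre[of 0 0] by auto
  show "\<exists>c \<in> half_turn_centres (H1 dk). is_cell_corner c"
  proof (cases "odd P")
    case True
    then show ?thesis using centre_pt_in_H1 centre_pt_cell_corner[of 1 0] by auto
  next
    case False
    then have "odd Q" using P_or_Q_odd by blast
    then show ?thesis using centre_pt_in_H1 centre_pt_cell_corner[of 0 1] by auto
  qed
qed

lemma species26o: "odd P \<Longrightarrow> odd Q \<Longrightarrow> species26o dk"
  unfolding species26o_def mirror_lines_eq
  using species26 alternating_diag_mirror alternating_anti_mirror by blast

lemma adjacent_diag_mirrors:
  assumes "even P" "odd Q" "adjacent_parallel (mirror_lines (G1 dk)) (1 + \<i>) l1 l2"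
  shows "only_centres_on (half_turn_centres (G1 dk)) l1 \<longleftrightarrow> only_corners_on (half_turn_centres (G1 dk)) l2"
proof -
  have nz: "- real_of_int Q \<noteq> 0" using Q_pos by simp
  have par: "\<And>l. l \<in> mirror_lines (G1 dk) \<Longrightarrow> parallel_to l (1 + \<i>) \<Longrightarrow> \<exists>k. l = diag_mirror k"
    using mirrors_parallel_diag by blast
  have inM: "\<And>k. diag_mirror k \<in> mirror_lines (G1 dk)" by (simp add: mirror_lines_eq)
  have pick: "\<And>k. of_int (k*Q) \<in> diag_mirror k" by (simp add: diag_mirror_def mem_line_diag)
  obtain k where "l1 = diag_mirror k \<and> (l2 = diag_mirror (k+1) \<or> l2 = diag_mirror (k - 1))"
    using adjacent_parallel_consecutive[OF par inM diag_mirror_parallel pick diag_mirror_coord nz assms(3)] by blast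
  then show ?thesis
  proof (elim conjE disjE)
    assume "l1 = diag_mirror k" "l2 = diag_mirror (k+1)"
    then show ?thesis using diag_mirror_kind[OF assms(1,2), of k] diag_mirror_kind[OF assms(1,2), of "k+1"] by simp
  next
    assume "l1 = diag_mirror k" "l2 = diag_mirror (k - 1)"
    then show ?thesis using diag_mirror_kind[OF assms(1,2), of k] diag_mirror_kind[OF assms(1,2), of "k - 1"] by simp
  qed
qed

lemma adjacent_anti_mirrors:
  assumes "odd P" "even Q" "adjacent_parallel (mirror_lines (G1 dk)) (1 - \<i>) l1 l2"
  shows "only_centres_on (half_turn_centres (G1 dk)) l1 \<longleftrightarrow> only_corners_on (half_turn_centres (G1 dk)) l2"
proof -
  have nz: "real_of_int P \<noteq> 0" using P_pos by simp
  have par: "\<And>l. l \<in> mirror_lines (G1 dk) \<Longrightarrow> parallel_to l (1 - \<i>) \<Longrightarrow> \<exists>m. l = anti_mirror m"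
    using mirrors_parallel_anti by blast
  have inM: "\<And>m. anti_mirror m \<in> mirror_lines (G1 dk)" by (simp add: mirror_lines_eq)
  have pick: "\<And>m. of_int (1 + m*P) \<in> anti_mirror m" by (simp add: anti_mirror_def mem_line_antidiag)
  obtain m where "l1 = anti_mirror m \<and> (l2 = anti_mirror (m+1) \<or> l2 = anti_mirror (m - 1))"
    using adjacent_parallel_consecutive[OF par inM anti_mirror_parallel pick anti_mirror_coord nz assms(3)] by blast
  then show ?thesis
  proof (elim conjE disjE)
    assume "l1 = anti_mirror m" "l2 = anti_mirror (m+1)"
    then show ?thesis using anti_mirror_kind[OF assms(1,2), of m] anti_mirror_kind[OF assms(1,2), of "m+1"] by simp
  next
    assume "l1 = anti_mirror m" "l2 = anti_mirror (m - 1)"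
    then show ?thesis using anti_mirror_kind[OF assms(1,2), of m] anti_mirror_kind[OF assms(1,2), of "m - 1"] by simp
  qed
qed

lemma species26e_even_P:
  assumes "even P" "odd Q"
  shows "species26e dk"
  unfolding species26e_def Let_def
proof (rule conjI[OF species26], rule exI[of _ "1 + \<i>"], rule exI[of _ "1 - \<i>"], intro conjI)
  show "{1 + \<i>, 1 - \<i>} = {1 + \<i>, 1 - \<i>}" "1 + \<i> \<noteq> 1 - \<i>" by (simp_all add: complex_eq_iff)
  show "\<forall>l \<in> mirror_lines (G1 dk). parallel_to l (1 + \<i>) \<longrightarrow>
      only_centres_on (half_turn_centres (G1 dk)) l \<or> only_corners_on (half_turn_centres (G1 dk)) l"
    using mirrors_parallel_diag diag_mirror_kind[OF assms] by blast
  show "\<forall>l1 l2. adjacent_parallel (mirror_lines (G1 dk)) (1 + \<i>) l1 l2 \<longrightarrow>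
      (only_centres_on (half_turn_centres (G1 dk)) l1 \<longleftrightarrow> only_corners_on (half_turn_centres (G1 dk)) l2)"
    using adjacent_diag_mirrors[OF assms] by blast
  show "\<forall>l \<in> mirror_lines (G1 dk). parallel_to l (1 - \<i>) \<longrightarrow> alternating_on (half_turn_centres (G1 dk)) l"
    using mirrors_parallel_anti alternating_anti_mirror[OF assms(2)] by blast
qed

lemma species26e_even_Q:
  assumes "odd P" "even Q"
  shows "species26e dk"
  unfolding species26e_def Let_def
proof (rule conjI[OF species26], rule exI[of _ "1 - \<i>"], rule exI[of _ "1 + \<i>"], intro conjI)
  show "{1 - \<i>, 1 + \<i>} = {1 + \<i>, 1 - \<i>}" "1 - \<i> \<noteq> 1 + \<i>" by (auto simp: complex_eq_iff)
  show "\<forall>l \<in> mirror_lines (G1 dk). parallel_to l (1 - \<i>) \<longrightarrow>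
      only_centres_on (half_turn_centres (G1 dk)) l \<or> only_corners_on (half_turn_centres (G1 dk)) l"
    using mirrors_parallel_anti anti_mirror_kind[OF assms] by blast
  show "\<forall>l1 l2. adjacent_parallel (mirror_lines (G1 dk)) (1 - \<i>) l1 l2 \<longrightarrow>
      (only_centres_on (half_turn_centres (G1 dk)) l1 \<longleftrightarrow> only_corners_on (half_turn_centres (G1 dk)) l2)"
    using adjacent_anti_mirrors[OF assms] by blast
  show "\<forall>l \<in> mirror_lines (G1 dk). parallel_to l (1 + \<i>) \<longrightarrow> alternating_on (half_turn_centres (G1 dk)) l"
    using mirrors_parallel_diag alternating_diag_mirror[OF assms(1)] by blast
qed

end

theorem theorem1:
  fixes n s :: nat
  assumes "rectangular_satin n s"
  shows "even n \<and> (n mod 4 = 2 \<longrightarrow> species26o (satin n s))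
                \<and> (4 dvd n \<longrightarrow> species26e (satin n s))"
proof -
  obtain P Q :: int where "P > 0" "Q > 0" "2*P*Q = int n" "2*P dvd int s + 1" "2*Q dvd int s - 1"
    using rectangular_satin_factorisation[OF assms] .
  moreover have "even n" "2 < n"
    using assms unfolding rectangular_satin_def isonemal_satin_def is_satin_def by auto
  ultimately interpret satin_factorisation n s P Q by unfold_locales
  show ?thesis
  proof (intro conjI impI)
    show "even n" by fact
  next
    assume "n mod 4 = 2"
    then have "odd P" "odd Q" using four_dvd_iff_even_factor by auto
    then show "species26o dk" by (rule species26o)
  next
    assume "4 dvd n"
    then have "even P \<or> even Q" using four_dvd_iff_even_factor by simp
    then show "species26e dk" using P_or_Q_odd species26e_even_P species26e_even_Q by blast
  qed
qed

end
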